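(* Suppose Assumptions (A1), (A2), (A4) hold, $F^*>-\infty$, and the parameters of MoSSP-R satisfy, for all $k\ge0$: $\mu_kL_{\rho_k}\le\frac14$, $\mu_{k+1}\le\mu_k$, $\rho_k\le\rho_{k+1}$, $0<\beta\le1$, and $0<32\mu_k^2L_f^2\le\alpha_k\le1$. Let $\{\bm w^k\}$ be generated by MoSSP-R. Then for any $K\ge1$, $$\frac1K\sum_{k=0}^{K-1}\alpha_k\mathbb{E}\|\bm e^k\|^2\le\frac{32\mu_0L_f^2(\mathcal{L}_{\rho_0,\mu_0}(\bm w^0)-\mathcal{L}^* )}{K}+\frac{2\mathbb{E}\|\bm e^0\|^2}{K}+\frac{32\mu_0L_f^2}{K}\sum_{k=0}^{K-1}\Big(\frac{\rho_{k+1}-\rho_k}{2}C^2+\mathbb{E}[\Delta_{k+1}]\Big)+\frac1K\sum_{k=0}^{K-1}4\alpha_k^2\sigma^2.$$ Furthermore, if $\mu_k\equiv\mu$, $\alpha_k\equiv\alpha$, $\rho_k\equiv\rho$ for all $k\ge0$, then $$\frac1K\sum_{k=0}^{K-1}\mathbb{E}\|\bm e^k\|^2\le\frac{32\mu L_f^2(\mathcal{L}_{\rho,\mu}(\bm w^0)-\mathcal{L}^* )}{\alpha K}+\frac{2\mathbb{E}\|\bm e^0\|^2}{\alpha K}+4\alpha\sigma^2.$$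
   Context: Problem data: $f(\bm x)=\mathbb{E}_\xi[\mathbf f(\bm x,\xi)]$ ($\xi\sim\Xi$), $f$ and $\bm c:\mathbb{R}^n\to\mathbb{R}^m$ continuously differentiable, $h:\mathbb{R}^n\to\mathbb{R}\cup\{+\infty\}$, $g:\mathbb{R}^n\to\mathbb{R}$ proper closed convex; $F^*:=\inf_{\bm x}\{f+h-g\}(\bm x)$; $\nabla\bm c(\bm x):=J_{\bm c}(\bm x)^\top$; $Q_\rho(\bm x):=f(\bm x)+\frac\rho2\|\bm c(\bm x)\|^2$; $\mathrm{prox}_{\mu\varphi}$ and Moreau envelope $\mathcal{M}_{\mu\varphi}(\bm z)=\min_{\bm x}\{\varphi(\bm x)+\frac1{2\mu}\|\bm x-\bm z\|^2\}$. Potential $\mathcal{L}_{\rho,\mu}(\bm x,\bm z):=Q_\rho(\bm x)+h(\bm x)+\frac1{2\mu}\|\bm x-\bm z\|^2-\mathcal{M}_{\mu g}(\bm z)$; $\mathcal{L}^*:=F^*-\frac{G^2\bar\mu}2$ with $\bar\mu$ a constant such that $\mu_k\le\bar\mu$ for all $k$; $\Delta_{k+1}:=\frac{|\mu_k-\mu_{k+1}|}{2\mu_{k+1}^2}(C^2+\|\bm x^{k+1}-\bm z^{k+1}\|^2)$. Parameter sequences $(\rho_k)_{k\ge0},(\mu_k)_{k\ge0}$ ($\rho_0,\mu_0$ first terms); $L_\rho:=\rho\tilde L$, $\tilde L=\rho_0^{-1}L_f+G^2+CL_c$. (A1): $f$ is $L_f$-smooth, $\nabla\bm c$ is $L_c$-Lipschitz,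 and there are $C,G>0$ with $\|\nabla f(\bm x)\|\le G$, all subgradients of $h$ and of $g$ have norm $\le G$, $\|\nabla\bm c(\bm x)\|\le G$, $\|\bm c(\bm x)\|\le C$ for all $\bm x$. (A2): $\mathbb{E}_\xi[\nabla\mathbf f(\bm x,\xi)]=\nabla f(\bm x)$, $\mathbb{E}_\xi\|\nabla\mathbf f(\bm x,\xi)-\nabla f(\bm x)\|^2\le\sigma^2$. (A4): for a.e. $\xi$, $\mathbf f(\cdot,\xi)$ differentiable and $\mathbb{E}_\xi\|\nabla\mathbf f(\bm x,\xi)-\nabla\mathbf f(\bm y,\xi)\|^2\le L_f^2\|\bm x-\bm y\|^2$ for all $\bm x,\bm y$. MoSSP-R: $\bm x^0=\bm z^0$; $\bm d^0=\frac1{b_0}\sum_{j=1}^{b_0}\nabla\mathbf f(\bm x^0,\xi^0_j)$ (i.i.d. batch); for $k\ge1$ fresh i.i.d. $\xi^k$, $\bm d^k=\nabla\mathbf f(\bm x^k,\xi^k)+(1-\alpha_{k-1})(\bm d^{k-1}-\nabla\mathbf f(\bm x^{k-1},\xi^k))$; $\bm D^k=\bm d^k+\rho_k\nabla\bm c(\bm x^k)\bm c(\bm x^k)$; $\bm x^{k+1}=\mathrm{prox}_{\mu_k h}(\bm z^k-\mu_k\bm D^k)$, $\bm z^{k+1}=\bm z^k-\beta(\mathrm{prox}_{\mu_k g}(\bm z^k)-\bm x^{k+1})$; $\bm w^k=(\bm x^k,\bm z^k)$; $\bm e^k:=\bm D^k-\nabla Q_{\rho_k}(\bm x^k)$. 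*)

theory Defs
  imports "HOL-Probability.Probability"
begin

definition subdiff :: "('a::real_inner \<Rightarrow> real) \<Rightarrow> 'a \<Rightarrow> 'a set" where
  "subdiff \<phi> x = {v. \<forall>y. \<phi> y \<ge> \<phi> x + v \<bullet> (y - x)}"

definition prox :: "real \<Rightarrow> ('a::real_normed_vector \<Rightarrow> real) \<Rightarrow> 'a \<Rightarrow> 'a" where
  "prox \<mu> \<phi> z = (SOME x. \<forall>y. \<phi> x + (norm (x - z))\<^sup>2 / (2 * \<mu>) \<le> \<phi> y + (norm (y - z))\<^sup>2 / (2 * \<mu>))"

definition moreau :: "real \<Rightarrow> ('a::real_normed_vector \<Rightarrow> real) \<Rightarrow> 'a \<Rightarrow> real" where
  "moreau \<mu> \<phi> z = (INF x. \<phi> x + (norm (x - z))\<^sup>2 / (2 * \<mu>))"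

text \<open>nabla c(x) := J_c(x)^T, i.e. the adjoint of the derivative Dc x of c at x.\<close>
definition gradc :: "('a::real_inner \<Rightarrow> 'a \<Rightarrow> 'b::real_inner) \<Rightarrow> 'a \<Rightarrow> 'b \<Rightarrow> 'a" where
  "gradc Dc x = adjoint (Dc x)"

definition Qpen :: "('a \<Rightarrow> real) \<Rightarrow> ('a \<Rightarrow> 'b::real_normed_vector) \<Rightarrow> real \<Rightarrow> 'a \<Rightarrow> real" where
  "Qpen f c \<rho> x = f x + \<rho> / 2 * (norm (c x))\<^sup>2"

definition gradQ :: "('a::real_inner \<Rightarrow> 'a) \<Rightarrow> ('a \<Rightarrow> 'a \<Rightarrow> 'b::real_inner) \<Rightarrow> ('a \<Rightarrow> 'b)
    \<Rightarrow> real \<Rightarrow> 'a \<Rightarrow> 'a" where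
  "gradQ gradf Dc c \<rho> x = gradf x + \<rho> *\<^sub>R gradc Dc x (c x)"

definition Lpot :: "('a::real_normed_vector \<Rightarrow> real) \<Rightarrow> ('a \<Rightarrow> 'b::real_normed_vector) \<Rightarrow> ('a \<Rightarrow> real)
    \<Rightarrow> ('a \<Rightarrow> real) \<Rightarrow> real \<Rightarrow> real \<Rightarrow> 'a \<Rightarrow> 'a \<Rightarrow> real" where
  "Lpot f c h g \<rho> \<mu> x z = Qpen f c \<rho> x + h x + (norm (x - z))\<^sup>2 / (2 * \<mu>) - moreau \<mu> g z"

definition Fstar :: "('a \<Rightarrow> real) \<Rightarrow> ('a \<Rightarrow> real) \<Rightarrow> ('a \<Rightarrow> real) \<Rightarrow> real" where
  "Fstar f h g = (INF x. f x + h x - g x)"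

end

(* The potential L_k = L_{rho_k,mu_k}(x^k, z^k) is bounded below by L^*, and along every sample path it
   pays for the steps of the iteration:
     ||x^{k+1} - x^k||^2 <= 8 mu_k (L_k - L_{k+1} + mu_k ||e^k||^2 + D_k),
   with D_k = (rho_{k+1} - rho_k) C^2 / 2 + Delta_{k+1} the cost of changing the parameters.  This
   combines the sufficient decrease of the proximal gradient step in x, the fact that the relaxed z-step
   cannot increase the potential (the Moreau envelope is convex with gradient (z - prox z) / mu), and the
   monotonicity of the potential in rho and mu.
   Since xi^{k+1} is independent of the past, the momentum estimator satisfies
     E||e^{k+1}||^2 <= (1 - alpha_k)^2 E||e^k||^2 + 2 alpha_k^2 sigma^2 + 2 L_f^2 E||x^{k+1} - x^k||^2.
   Summing this recursion, bounding the step lengths by the potential inequality and absorbing the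
   resulting 16 mu_k^2 L_f^2 ||e^k||^2 <= alpha_k / 2 ||e^k||^2 gives the bound. *)

theory Submission
  imports Defs
begin

section \<open>Proximal operators and Moreau envelopes\<close>

lemma power2_norm_add_scaleR:
  fixes a b :: "'a::real_inner"
  shows "(norm (a + m *\<^sub>R b))\<^sup>2 = (norm a)\<^sup>2 + 2 * m * (a \<bullet> b) + m\<^sup>2 * (norm b)\<^sup>2"
  unfolding power2_norm_eq_inner by (simp add: inner_add inner_commute power2_eq_square algebra_simps)

lemma nonneg_if_nonneg_add_small_multiples:
  fixes a b :: real
  assumes "\<And>t. 0 < t \<Longrightarrow> t \<le> 1 \<Longrightarrow> 0 \<le> a + t * b"
  shows "0 \<le> a"
proof (rule tendsto_lowerbound)
  show "((\<lambda>t. a + t * b) \<longlongrightarrow> a) (at_right 0)"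
    by (auto intro!: tendsto_eq_intros)
  show "\<forall>\<^sub>F t in at_right 0. 0 \<le> a + t * b"
    by (rule eventually_mono[OF eventually_at_right_real[of 0 1]]) (use assms in auto)
qed simp

lemma subdiffD: "v \<in> subdiff \<phi> x \<Longrightarrow> \<phi> x + v \<bullet> (y - x) \<le> \<phi> y"
  by (simp add: subdiff_def)

lemma convex_on_linear_lower_bound:
  fixes h :: "'a::euclidean_space \<Rightarrow> real"
  assumes cvx: "convex_on UNIV h"
  shows "\<exists>A\<ge>0. \<forall>y. h u - A - A * norm (y - u) \<le> h y"
proof -
  have cont: "continuous_on UNIV h" using convex_on_continuous[OF open_UNIV cvx] .
  obtain w where w: "\<forall>y\<in>cball u 1. h w \<le> h y"
    using continuous_attains_inf[OF compact_cball _ continuous_on_subset[OF cont subset_UNIV], of u 1]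
    by auto
  define A where "A = \<bar>h u - h w\<bar>"
  have "h u - A - A * norm (y - u) \<le> h y" for y
  proof (cases "norm (y - u) \<le> 1")
    case True
    then have "h w \<le> h y" using w by (auto simp: dist_norm norm_minus_commute)
    moreover have "h u - A \<le> h w" "0 \<le> A * norm (y - u)" by (simp_all add: A_def)
    ultimately show ?thesis by linarith
  next
    case False
    define r where "r = norm (y - u)"
    have r1: "r > 1" using False by (simp add: r_def)
    define t where "t = 1 / r"
    have t: "0 < t" "t \<le> 1" "r * t = 1" using r1 by (auto simp: t_def)
    \<comment> \<open>the point at distance 1 from u on the segment towards y\<close>
    have "(1 - t) *\<^sub>R u + t *\<^sub>R y \<in> cball u 1"
      using t r1 by (simp add: dist_norm algebra_simps r_def norm_minus_commute flip: scaleR_diff_right)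
    then have "h w \<le> h ((1 - t) *\<^sub>R u + t *\<^sub>R y)" using w by auto
    also have "\<dots> \<le> (1 - t) * h u + t * h y"
      using convex_onD[OF cvx, of t u y] t by auto
    finally have "r * h w \<le> r * ((1 - t) * h u + t * h y)" using r1 by (intro mult_left_mono) auto
    also have "\<dots> = (r - r * t) * h u + (r * t) * h y" by (simp add: algebra_simps)
    finally have "h u + r * (h w - h u) \<le> h y" using t by (simp add: algebra_simps)
    moreover have "- A * r \<le> r * (h w - h u)"
      using mult_left_mono[of "- A" "h w - h u" r] r1 by (simp add: A_def mult.commute)
    ultimately show ?thesis by (simp add: r_def A_def)
  qed
  then show ?thesis by (intro exI[of _ A]) (simp add: A_def)
qed

lemma prox_minimiser_exists:
  fixes h :: "'a::euclidean_space \<Rightarrow> real"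
  assumes cvx: "convex_on UNIV h" and mu: "\<mu> > 0"
  shows "\<exists>p. \<forall>y. h p + (norm (p - u))\<^sup>2 / (2 * \<mu>) \<le> h y + (norm (y - u))\<^sup>2 / (2 * \<mu>)"
proof -
  define \<Phi> where "\<Phi> y = h y + (norm (y - u))\<^sup>2 / (2 * \<mu>)" for y
  have cont: "continuous_on UNIV h" using convex_on_continuous[OF open_UNIV cvx] .
  have contP: "continuous_on UNIV \<Phi>" unfolding \<Phi>_def
    using mu by (intro continuous_intros cont) auto
  obtain A where A: "A \<ge> 0" "\<And>y. h u - A - A * norm (y - u) \<le> h y"
    using convex_on_linear_lower_bound[OF cvx, of u] by auto
  \<comment> \<open>outside this ball the quadratic term beats the linear lower bound, so \<open>\<Phi> > h u = \<Phi> u\<close>\<close>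
  define R where "R = 2 * \<mu> * (2 * A + 1) + 1"
  have R1: "R \<ge> 1" using A mu by (simp add: R_def)
  obtain p where p: "\<forall>y\<in>cball u R. \<Phi> p \<le> \<Phi> y"
    using continuous_attains_inf[OF compact_cball _ continuous_on_subset[OF contP subset_UNIV], of u R] R1
    by auto
  have "\<Phi> p \<le> \<Phi> y" for y
  proof (cases "y \<in> cball u R")
    case False
    define r where "r = norm (y - u)"
    have rR: "r > R" using False by (simp add: r_def dist_norm norm_minus_commute)
    then have "r / (2 * \<mu>) > 2 * A + 1" using mu by (simp add: R_def field_simps)
    then have "r * (r / (2 * \<mu>)) \<ge> r * (2 * A + 1)" using rR R1 by (intro mult_left_mono) auto
    moreover have "A * r \<ge> A" using A rR R1 by (simp add: mult_le_cancel_left1)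
    ultimately have "r\<^sup>2 / (2 * \<mu>) \<ge> A * r + A + 1"
      using rR R1 by (simp add: power2_eq_square algebra_simps)
    then have "h u < \<Phi> y" using A(2)[of y] by (simp add: \<Phi>_def r_def)
    moreover have "\<Phi> p \<le> \<Phi> u" using p R1 by simp
    moreover have "\<Phi> u = h u" by (simp add: \<Phi>_def)
    ultimately show ?thesis by simp
  qed (use p in auto)
  then show ?thesis unfolding \<Phi>_def by blast
qed

lemma prox_minimises:
  fixes h :: "'a::euclidean_space \<Rightarrow> real"
  assumes "convex_on UNIV h" and "\<mu> > 0"
  shows "h (prox \<mu> h u) + (norm (prox \<mu> h u - u))\<^sup>2 / (2 * \<mu>) \<le> h y + (norm (y - u))\<^sup>2 / (2 * \<mu>)"
  using someI_ex[OF prox_minimiser_exists[OF assms, of u]] unfolding prox_def by blast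

lemma prox_subgradient:
  fixes h :: "'a::euclidean_space \<Rightarrow> real"
  assumes cvx: "convex_on UNIV h" and mu: "\<mu> > 0"
  shows "(1 / \<mu>) *\<^sub>R (u - prox \<mu> h u) \<in> subdiff h (prox \<mu> h u)"
proof -
  define p where "p = prox \<mu> h u"
  have nonneg: "0 \<le> h y - h p + ((p - u) \<bullet> (y - p)) / \<mu>" for y
  proof (rule nonneg_if_nonneg_add_small_multiples)
    fix t :: real assume t: "0 < t" "t \<le> 1"
    define S X N where "S = (norm (p - u))\<^sup>2" and "X = (p - u) \<bullet> (y - p)" and "N = (norm (y - p))\<^sup>2"
    \<comment> \<open>compare p with the point \<open>p + t (y - p)\<close> and let \<open>t \<rightarrow> 0\<close>\<close>
    have "h p + S / (2 * \<mu>) \<le> h ((1 - t) *\<^sub>R p + t *\<^sub>R y) + (norm ((1 - t) *\<^sub>R p + t *\<^sub>R y - u))\<^sup>2 / (2 * \<mu>)"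
      using prox_minimises[OF cvx mu, of u] unfolding p_def S_def by blast
    also have "h ((1 - t) *\<^sub>R p + t *\<^sub>R y) \<le> (1 - t) * h p + t * h y"
      using convex_onD[OF cvx, of t p y] t by auto
    also have "(1 - t) *\<^sub>R p + t *\<^sub>R y - u = (p - u) + t *\<^sub>R (y - p)" by (simp add: algebra_simps)
    also have "(norm ((p - u) + t *\<^sub>R (y - p)))\<^sup>2 = S + 2 * t * X + t\<^sup>2 * N"
      by (simp add: power2_norm_add_scaleR S_def X_def N_def)
    also have "(S + 2 * t * X + t\<^sup>2 * N) / (2 * \<mu>) = S / (2 * \<mu>) + t * (X / \<mu> + t * (N / (2 * \<mu>)))"
      using mu by (simp add: field_simps power2_eq_square)
    finally have "0 \<le> t * ((h y - h p + X / \<mu>) + t * (N / (2 * \<mu>)))"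
      by (simp add: algebra_simps)
    then show "0 \<le> h y - h p + X / \<mu> + t * (N / (2 * \<mu>))"
      using t by (simp add: zero_le_mult_iff)
  qed
  have inner_eq: "((1 / \<mu>) *\<^sub>R (u - p)) \<bullet> (y - p) = - (((p - u) \<bullet> (y - p)) / \<mu>)" for y
    using mu by (simp add: inner_diff_left field_simps)
  show ?thesis unfolding subdiff_def p_def[symmetric]
  proof (intro CollectI allI)
    fix y
    show "h p + ((1 / \<mu>) *\<^sub>R (u - p)) \<bullet> (y - p) \<le> h y"
      using nonneg[of y] inner_eq[of y] by linarith
  qed
qed

lemma prox_three_point:
  fixes h :: "'a::euclidean_space \<Rightarrow> real"
  assumes cvx: "convex_on UNIV h" and mu: "\<mu> > 0"
  shows "h (prox \<mu> h u) + (norm (prox \<mu> h u - u))\<^sup>2 / (2 * \<mu>) + (norm (y - prox \<mu> h u))\<^sup>2 / (2 * \<mu>)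
         \<le> h y + (norm (y - u))\<^sup>2 / (2 * \<mu>)"
proof -
  define p where "p = prox \<mu> h u"
  have "h p + ((u - p) \<bullet> (y - p)) / \<mu> \<le> h y"
    using subdiffD[OF prox_subgradient[OF cvx mu]] by (simp add: p_def inner_scaleR_left)
  moreover have "(norm (y - u))\<^sup>2 = (norm (y - p))\<^sup>2 - 2 * ((u - p) \<bullet> (y - p)) + (norm (p - u))\<^sup>2"
    unfolding power2_norm_eq_inner by (simp add: inner_diff inner_commute)
  then have "(norm (y - u))\<^sup>2 / (2 * \<mu>)
      = (norm (y - p))\<^sup>2 / (2 * \<mu>) - ((u - p) \<bullet> (y - p)) / \<mu> + (norm (p - u))\<^sup>2 / (2 * \<mu>)"
    using mu by (simp add: field_simps)
  ultimately show ?thesis unfolding p_def[symmetric] by linarith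
qed

lemma prox_nonexpansive:
  fixes h :: "'a::euclidean_space \<Rightarrow> real"
  assumes cvx: "convex_on UNIV h" and mu: "\<mu> > 0"
  shows "norm (prox \<mu> h u - prox \<mu> h v) \<le> norm (u - v)"
proof -
  define p q where "p = prox \<mu> h u" and "q = prox \<mu> h v"
  \<comment> \<open>monotonicity of the subdifferential\<close>
  have "((1 / \<mu>) *\<^sub>R (u - p)) \<bullet> (q - p) + ((1 / \<mu>) *\<^sub>R (v - q)) \<bullet> (p - q) \<le> 0"
    using subdiffD[OF prox_subgradient[OF cvx mu, of u], of q]
      subdiffD[OF prox_subgradient[OF cvx mu, of v], of p]
    by (simp add: p_def q_def)
  then have "0 \<le> (1 / \<mu>) * (((u - p) - (v - q)) \<bullet> (p - q))"
    by (simp add: inner_diff_left inner_diff_right inner_commute algebra_simps)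
  then have "0 \<le> ((u - p) - (v - q)) \<bullet> (p - q)"
    using mu by (simp add: zero_le_divide_iff)
  then have "(norm (p - q))\<^sup>2 \<le> (u - v) \<bullet> (p - q)"
    by (simp add: power2_norm_eq_inner inner_diff_left inner_diff_right inner_commute algebra_simps)
  also have "\<dots> \<le> norm (u - v) * norm (p - q)" by (rule norm_cauchy_schwarz)
  finally have "norm (p - q) \<le> norm (u - v)"
    by (cases "p = q") (auto simp: power2_eq_square)
  then show ?thesis by (simp add: p_def q_def)
qed

lemma continuous_on_prox:
  fixes h :: "'a::euclidean_space \<Rightarrow> real"
  assumes "convex_on UNIV h" and "\<mu> > 0"
  shows "continuous_on S (prox \<mu> h)"
  by (rule lipschitz_on_continuous_on[of 1])
    (auto intro!: lipschitz_onI simp: dist_norm prox_nonexpansive[OF assms])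

lemma norm_prox_diff_le:
  fixes \<phi> :: "'a::euclidean_space \<Rightarrow> real"
  assumes cvx: "convex_on UNIV \<phi>" and bd: "\<And>x v. v \<in> subdiff \<phi> x \<Longrightarrow> norm v \<le> G" and m: "m > 0"
  shows "norm (prox m \<phi> u - u) \<le> m * G"
proof -
  have "norm ((1 / m) *\<^sub>R (u - prox m \<phi> u)) \<le> G" by (rule bd, rule prox_subgradient[OF cvx m])
  then have "norm (u - prox m \<phi> u) / m \<le> G" using m by (simp only: norm_scaleR) simp
  then show ?thesis using m by (simp add: norm_minus_commute pos_divide_le_eq mult.commute)
qed

lemma moreau_eq_prox:
  fixes g :: "'a::euclidean_space \<Rightarrow> real"
  assumes "convex_on UNIV g" and "\<mu> > 0"
  shows "moreau \<mu> g z = g (prox \<mu> g z) + (norm (prox \<mu> g z - z))\<^sup>2 / (2 * \<mu>)"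
  unfolding moreau_def using prox_minimises[OF assms] by (intro cInf_eq_minimum) auto

lemma moreau_le:
  fixes g :: "'a::euclidean_space \<Rightarrow> real"
  assumes "convex_on UNIV g" and "\<mu> > 0"
  shows "moreau \<mu> g z \<le> g y + (norm (y - z))\<^sup>2 / (2 * \<mu>)"
  using moreau_eq_prox[OF assms] prox_minimises[OF assms] by simp

lemma moreau_antimono:
  fixes g :: "'a::euclidean_space \<Rightarrow> real"
  assumes cvx: "convex_on UNIV g" and mu: "\<mu>' > 0" "\<mu>' \<le> \<mu>"
  shows "moreau \<mu> g z \<le> moreau \<mu>' g z"
proof -
  have "moreau \<mu> g z \<le> g (prox \<mu>' g z) + (norm (prox \<mu>' g z - z))\<^sup>2 / (2 * \<mu>)"
    using moreau_le[OF cvx] mu by auto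
  also have "\<dots> \<le> g (prox \<mu>' g z) + (norm (prox \<mu>' g z - z))\<^sup>2 / (2 * \<mu>')"
    using mu by (intro add_left_mono divide_left_mono) auto
  also have "\<dots> = moreau \<mu>' g z" using moreau_eq_prox[OF cvx mu(1)] by simp
  finally show ?thesis .
qed

lemma moreau_subgradient:
  fixes g :: "'a::euclidean_space \<Rightarrow> real"
  assumes cvx: "convex_on UNIV g" and mu: "\<mu> > 0"
  shows "(1 / \<mu>) *\<^sub>R (z - prox \<mu> g z) \<in> subdiff (moreau \<mu> g) z"
  unfolding subdiff_def
proof (intro CollectI allI)
  fix z'
  define p p' where "p = prox \<mu> g z" and "p' = prox \<mu> g z'"
  have sg: "g p + ((z - p) \<bullet> (p' - p)) / \<mu> \<le> g p'"
    using subdiffD[OF prox_subgradient[OF cvx mu, of z], of p'] by (simp add: p_def p'_def)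
  have "0 \<le> (norm ((p' - z') + (z - p)))\<^sup>2" by simp
  then have "(norm (p - z))\<^sup>2 + 2 * ((z - p) \<bullet> (z' - z)) - 2 * ((z - p) \<bullet> (p' - p)) \<le> (norm (p' - z'))\<^sup>2"
    unfolding power2_norm_eq_inner by (simp add: inner_add inner_diff inner_commute algebra_simps)
  then have "((norm (p - z))\<^sup>2 + 2 * ((z - p) \<bullet> (z' - z)) - 2 * ((z - p) \<bullet> (p' - p))) / (2 * \<mu>)
      \<le> (norm (p' - z'))\<^sup>2 / (2 * \<mu>)"
    using mu by (intro divide_right_mono) auto
  then have "(norm (p - z))\<^sup>2 / (2 * \<mu>) + ((z - p) \<bullet> (z' - z)) / \<mu> - ((z - p) \<bullet> (p' - p)) / \<mu>
      \<le> (norm (p' - z'))\<^sup>2 / (2 * \<mu>)"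
    by (simp add: add_divide_distrib diff_divide_distrib)
  with sg show "moreau \<mu> g z + ((1 / \<mu>) *\<^sub>R (z - prox \<mu> g z)) \<bullet> (z' - z) \<le> moreau \<mu> g z'"
    by (simp add: moreau_eq_prox[OF cvx mu] p_def[symmetric] p'_def[symmetric])
qed

section \<open>Smoothness of the penalty function\<close>

lemma descent_lemma:
  fixes \<phi> :: "'a::real_inner \<Rightarrow> real"
  assumes der: "\<And>x. (\<phi> has_derivative (\<lambda>v. g\<phi> x \<bullet> v)) (at x)"
    and lip: "\<And>x y. norm (g\<phi> x - g\<phi> y) \<le> L * norm (x - y)"
  shows "\<phi> y \<le> \<phi> x + g\<phi> x \<bullet> (y - x) + L / 2 * (norm (y - x))\<^sup>2"
proof -
  define v where "v = y - x"
  define \<psi> where "\<psi> t = \<phi> (x + t *\<^sub>R v) - t * (g\<phi> x \<bullet> v) - L / 2 * t\<^sup>2 * (norm v)\<^sup>2" for t :: real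
  have d: "(\<psi> has_real_derivative (g\<phi> (x + t *\<^sub>R v) \<bullet> v - g\<phi> x \<bullet> v - L * t * (norm v)\<^sup>2)) (at t)" for t
  proof -
    have "((\<lambda>t. x + t *\<^sub>R v) has_derivative (\<lambda>s. s *\<^sub>R v)) (at t)"
      by (auto intro!: derivative_eq_intros)
    from has_derivative_compose[OF this der]
    have "((\<lambda>t. \<phi> (x + t *\<^sub>R v)) has_derivative (*) (g\<phi> (x + t *\<^sub>R v) \<bullet> v)) (at t)"
      by (rule has_derivative_eq_rhs) (simp add: fun_eq_iff o_def)
    then have "((\<lambda>t. \<phi> (x + t *\<^sub>R v)) has_real_derivative (g\<phi> (x + t *\<^sub>R v) \<bullet> v)) (at t)"
      by (simp add: has_field_derivative_def)
    then show ?thesis unfolding \<psi>_def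
      by (auto intro!: derivative_eq_intros simp: power2_eq_square)
  qed
  have "\<psi> 1 \<le> \<psi> 0"
  proof (rule DERIV_nonpos_imp_nonincreasing[of 0 1])
    fix t :: real assume t: "0 \<le> t" "t \<le> 1"
    have "g\<phi> (x + t *\<^sub>R v) \<bullet> v - g\<phi> x \<bullet> v \<le> norm (g\<phi> (x + t *\<^sub>R v) - g\<phi> x) * norm v"
      by (metis inner_diff_left norm_cauchy_schwarz)
    also have "\<dots> \<le> (L * norm (t *\<^sub>R v)) * norm v" using lip[of "x + t *\<^sub>R v" x] by (intro mult_right_mono) auto
    also have "\<dots> = L * t * (norm v)\<^sup>2" using t by (simp add: power2_eq_square)
    finally show "\<exists>y. (\<psi> has_real_derivative y) (at t) \<and> y \<le> 0" using d by (intro exI conjI) auto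
  qed simp
  then show ?thesis by (simp add: \<psi>_def v_def algebra_simps)
qed

locale constraint_map =
  fixes c :: "'a::euclidean_space \<Rightarrow> 'b::euclidean_space" and Dc :: "'a \<Rightarrow> 'a \<Rightarrow> 'b"
    and G C Lc :: real
  assumes c_deriv: "\<And>x. (c has_derivative Dc x) (at x)"
    and c_smooth: "\<And>x y. onorm (\<lambda>v. gradc Dc x v - gradc Dc y v) \<le> Lc * norm (x - y)"
    and gradc_bd: "\<And>x. onorm (gradc Dc x) \<le> G"
    and c_bd: "\<And>x. norm (c x) \<le> C"
begin

lemma linear_Dc: "linear (Dc x)"
  using has_derivative_bounded_linear[OF c_deriv] bounded_linear.linear by blast

lemma linear_gradc: "linear (gradc Dc x)"
  unfolding gradc_def by (rule adjoint_linear[OF linear_Dc])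

lemma bounded_linear_gradc: "bounded_linear (gradc Dc x)"
  using linear_gradc linear_conv_bounded_linear by blast

lemma G_nonneg: "G \<ge> 0"
  using onorm_pos_le[OF bounded_linear_gradc] gradc_bd order_trans by blast

lemma norm_gradc_le: "norm (gradc Dc x w) \<le> G * norm w"
proof -
  have "norm (gradc Dc x w) \<le> onorm (gradc Dc x) * norm w" by (rule onorm[OF bounded_linear_gradc])
  also have "\<dots> \<le> G * norm w" using gradc_bd by (intro mult_right_mono) auto
  finally show ?thesis .
qed

lemma inner_Dc_gradc: "Dc x v \<bullet> w = v \<bullet> gradc Dc x w"
  unfolding gradc_def using adjoint_works[OF linear_Dc] by simp

lemma norm_Dc_le: "norm (Dc x v) \<le> G * norm v"
proof -
  have "(norm (Dc x v))\<^sup>2 = v \<bullet> gradc Dc x (Dc x v)"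
    by (simp add: power2_norm_eq_inner inner_Dc_gradc)
  also have "\<dots> \<le> norm v * norm (gradc Dc x (Dc x v))" by (rule norm_cauchy_schwarz)
  also have "\<dots> \<le> norm v * (G * norm (Dc x v))" by (intro mult_left_mono norm_gradc_le) auto
  finally show ?thesis
    using G_nonneg by (cases "Dc x v = 0") (auto simp: power2_eq_square algebra_simps)
qed

lemma c_lipschitz: "norm (c x - c y) \<le> G * norm (x - y)"
  using differentiable_bound[of UNIV c Dc G x y] c_deriv onorm_le[OF norm_Dc_le]
  by (auto simp: convex_UNIV)

lemma gradc_c_lipschitz: "norm (gradc Dc x (c x) - gradc Dc y (c y)) \<le> (C * Lc + G\<^sup>2) * norm (x - y)"
proof -
  have split: "gradc Dc x (c x) - gradc Dc y (c y) = (gradc Dc x (c x) - gradc Dc y (c x)) + gradc Dc y (c x - c y)"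
    using linear_diff[OF linear_gradc, of y "c x" "c y"] by simp
  have bl: "bounded_linear (\<lambda>v. gradc Dc x v - gradc Dc y v)"
    using linear_compose_sub[OF linear_gradc linear_gradc] linear_conv_bounded_linear by blast
  have "norm (gradc Dc x (c x) - gradc Dc y (c x)) \<le> onorm (\<lambda>v. gradc Dc x v - gradc Dc y v) * norm (c x)"
    by (rule onorm[OF bl])
  also have "\<dots> \<le> (Lc * norm (x - y)) * C"
    using c_smooth[of x y] c_bd[of x] onorm_pos_le[OF bl] by (intro mult_mono) auto
  finally have 1: "norm (gradc Dc x (c x) - gradc Dc y (c x)) \<le> C * Lc * norm (x - y)" by (simp add: algebra_simps)
  have "norm (gradc Dc y (c x - c y)) \<le> G * norm (c x - c y)" by (rule norm_gradc_le)
  also have "\<dots> \<le> G * (G * norm (x - y))" by (intro mult_left_mono c_lipschitz G_nonneg)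
  finally have 2: "norm (gradc Dc y (c x - c y)) \<le> G\<^sup>2 * norm (x - y)" by (simp add: power2_eq_square)
  show ?thesis unfolding split using norm_triangle_le[OF add_mono[OF 1 2]] by (simp add: algebra_simps)
qed

lemma continuous_on_gradc_c: "continuous_on S (\<lambda>x. gradc Dc x (c x))"
proof (rule lipschitz_on_continuous_on[of "\<bar>C * Lc + G\<^sup>2\<bar>"], rule lipschitz_onI)
  fix x y
  have "norm (gradc Dc x (c x) - gradc Dc y (c y)) \<le> \<bar>C * Lc + G\<^sup>2\<bar> * norm (x - y)"
    using gradc_c_lipschitz[of x y] mult_right_mono[OF abs_ge_self norm_ge_zero, of "C * Lc + G\<^sup>2" "x - y"]
    by linarith
  then show "dist (gradc Dc x (c x)) (gradc Dc y (c y)) \<le> \<bar>C * Lc + G\<^sup>2\<bar> * dist x y"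
    by (simp add: dist_norm)
qed simp

lemma Qpen_descent:
  fixes f :: "'a \<Rightarrow> real" and gradf :: "'a \<Rightarrow> 'a"
  assumes f_grad: "\<And>x. (f has_derivative (\<lambda>v. gradf x \<bullet> v)) (at x)"
    and f_smooth: "\<And>x y. norm (gradf x - gradf y) \<le> Lf * norm (x - y)"
    and rho: "0 \<le> \<rho>"
  shows "Qpen f c \<rho> y \<le> Qpen f c \<rho> x + gradQ gradf Dc c \<rho> x \<bullet> (y - x)
           + (Lf + \<rho> * (C * Lc + G\<^sup>2)) / 2 * (norm (y - x))\<^sup>2"
proof (rule descent_lemma[of "Qpen f c \<rho>" "gradQ gradf Dc c \<rho>"])
  fix x
  have "((\<lambda>x. c x \<bullet> c x) has_derivative (\<lambda>v. Dc x v \<bullet> c x + c x \<bullet> Dc x v)) (at x)"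
    using has_derivative_inner[OF c_deriv c_deriv] by (simp add: inner_commute)
  moreover have "Dc x v \<bullet> c x = gradc Dc x (c x) \<bullet> v" "c x \<bullet> Dc x v = gradc Dc x (c x) \<bullet> v" for v
    by (metis inner_Dc_gradc inner_commute)+
  ultimately have "((\<lambda>x. (norm (c x))\<^sup>2) has_derivative (\<lambda>v. 2 * (gradc Dc x (c x) \<bullet> v))) (at x)"
    by (simp add: power2_norm_eq_inner)
  from has_derivative_add[OF f_grad has_derivative_mult_right[OF this, of "\<rho> / 2"]]
  show "(Qpen f c \<rho> has_derivative (\<lambda>v. gradQ gradf Dc c \<rho> x \<bullet> v)) (at x)"
    unfolding Qpen_def[abs_def] gradQ_def by (simp add: inner_add_left)
next
  fix x y
  have "norm (gradQ gradf Dc c \<rho> x - gradQ gradf Dc c \<rho> y)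
      = norm ((gradf x - gradf y) + \<rho> *\<^sub>R (gradc Dc x (c x) - gradc Dc y (c y)))"
    by (simp add: gradQ_def algebra_simps)
  also have "\<dots> \<le> norm (gradf x - gradf y) + \<rho> * norm (gradc Dc x (c x) - gradc Dc y (c y))"
    using norm_triangle_ineq[of "gradf x - gradf y" "\<rho> *\<^sub>R (gradc Dc x (c x) - gradc Dc y (c y))"] rho
    by simp
  also have "\<dots> \<le> Lf * norm (x - y) + \<rho> * ((C * Lc + G\<^sup>2) * norm (x - y))"
    by (intro add_mono f_smooth mult_left_mono gradc_c_lipschitz rho)
  finally show "norm (gradQ gradf Dc c \<rho> x - gradQ gradf Dc c \<rho> y) \<le> (Lf + \<rho> * (C * Lc + G\<^sup>2)) * norm (x - y)"
    by (simp add: algebra_simps)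
qed

end

section \<open>Second moments of the momentum estimator\<close>

lemma power2_add_le: "(p + q)\<^sup>2 \<le> 2 * (p\<^sup>2 + (q::real)\<^sup>2)"
  using zero_le_power2[of "p - q"] by (simp add: power2_eq_square algebra_simps)

lemma power2_add3_le: "(p + q + r)\<^sup>2 \<le> 3 * (p\<^sup>2 + q\<^sup>2 + (r::real)\<^sup>2)"
  using zero_le_power2[of "p - q"] zero_le_power2[of "q - r"] zero_le_power2[of "p - r"]
  by (simp add: power2_eq_square algebra_simps)

lemma product_le_weighted_squares:
  fixes a b m :: real
  assumes "m > 0"
  shows "a * b \<le> m * a\<^sup>2 + b\<^sup>2 / (4 * m)"
proof -
  have "0 \<le> (2 * m * a - b)\<^sup>2 / (4 * m)" using assms by simp
  also have "\<dots> = m * a\<^sup>2 + b\<^sup>2 / (4 * m) - a * b" using assms by (simp add: field_simps power2_eq_square)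
  finally show ?thesis by simp
qed

lemma power2_norm_add_le:
  fixes a b :: "'a::real_normed_vector"
  shows "(norm (a + b))\<^sup>2 \<le> 2 * (norm a)\<^sup>2 + 2 * (norm b)\<^sup>2"
proof -
  have "(norm (a + b))\<^sup>2 \<le> (norm a + norm b)\<^sup>2" by (rule power_mono[OF norm_triangle_ineq norm_ge_zero])
  also have "\<dots> \<le> 2 * (norm a)\<^sup>2 + 2 * (norm b)\<^sup>2" using power2_add_le[of "norm a" "norm b"] by simp
  finally show ?thesis .
qed

lemma
  fixes f :: "'a \<Rightarrow> real"
  assumes f: "f \<in> borel_measurable M" "\<And>x. 0 \<le> f x"
    and le: "(\<integral>\<^sup>+x. f x \<partial>M) \<le> ennreal B" and B: "0 \<le> B"
  shows integrable_if_nn_integral_le: "integrable M f"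
    and integral_le_if_nn_integral_le: "integral\<^sup>L M f \<le> B"
proof -
  show int: "integrable M f"
    using f le by (intro integrableI_bounded) (auto intro: le_less_trans)
  have "ennreal (integral\<^sup>L M f) = (\<integral>\<^sup>+x. f x \<partial>M)"
    by (rule nn_integral_eq_integral[symmetric]) (use int f in auto)
  also note le
  finally show "integral\<^sup>L M f \<le> B" by (simp add: ennreal_le_iff[OF B])
qed

lemma (in prob_space)
  fixes V :: "'a \<Rightarrow> 'b::euclidean_space"
  assumes V: "integrable M V" "integrable M (\<lambda>s. (norm (V s))\<^sup>2)" and mean: "expectation V = 0"
  shows integrable_norm_sq_shift: "integrable M (\<lambda>s. (norm (u + V s))\<^sup>2)"
    and expectation_norm_sq_shift: "expectation (\<lambda>s. (norm (u + V s))\<^sup>2) = (norm u)\<^sup>2 + expectation (\<lambda>s. (norm (V s))\<^sup>2)"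
proof -
  have expand: "(norm (u + V s))\<^sup>2 = (norm u)\<^sup>2 + 2 * (u \<bullet> V s) + (norm (V s))\<^sup>2" for s
    by (simp add: power2_norm_eq_inner inner_add inner_commute)
  show "integrable M (\<lambda>s. (norm (u + V s))\<^sup>2)" unfolding expand using V by auto
  show "expectation (\<lambda>s. (norm (u + V s))\<^sup>2) = (norm u)\<^sup>2 + expectation (\<lambda>s. (norm (V s))\<^sup>2)"
    unfolding expand using V mean by (simp add: prob_space)
qed

lemma (in prob_space)
  fixes X :: "'a \<Rightarrow> 'b::euclidean_space"
  assumes X: "integrable M X" "integrable M (\<lambda>s. (norm (X s))\<^sup>2)"
  shows integrable_norm_sq_centered: "integrable M (\<lambda>s. (norm (X s - expectation X))\<^sup>2)"
    and expectation_norm_sq_centered_le: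
      "expectation (\<lambda>s. (norm (X s - expectation X))\<^sup>2) \<le> expectation (\<lambda>s. (norm (X s))\<^sup>2)"
proof -
  have expand: "(norm (X s - expectation X))\<^sup>2 = (norm (X s))\<^sup>2 - 2 * (X s \<bullet> expectation X) + (norm (expectation X))\<^sup>2" for s
    by (simp add: power2_norm_eq_inner inner_diff inner_commute)
  show "integrable M (\<lambda>s. (norm (X s - expectation X))\<^sup>2)" unfolding expand using X by auto
  have "expectation (\<lambda>s. (norm (X s - expectation X))\<^sup>2) = expectation (\<lambda>s. (norm (X s))\<^sup>2) - (norm (expectation X))\<^sup>2"
    unfolding expand using X by (simp add: prob_space power2_norm_eq_inner inner_commute)
  then show "expectation (\<lambda>s. (norm (X s - expectation X))\<^sup>2) \<le> expectation (\<lambda>s. (norm (X s))\<^sup>2)"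
    by simp
qed

lemma integrable_if_nonneg_le:
  fixes F H :: "'a \<Rightarrow> real"
  assumes "integrable M H" "F \<in> borel_measurable M" "\<And>x. 0 \<le> F x" "\<And>x. F x \<le> H x"
  shows "integrable M F"
  by (rule Bochner_Integration.integrable_bound[OF assms(1,2)])
    (use assms(3,4) in \<open>auto intro!: AE_I2 intro: order_trans[OF _ abs_ge_self]\<close>)

locale stochastic_gradient = Xi: prob_space \<Xi>
  for \<Xi> :: "'s measure" +
  fixes gradF :: "'a::euclidean_space \<Rightarrow> 's \<Rightarrow> 'a" and gradf :: "'a \<Rightarrow> 'a" and \<sigma> Lf :: real
  assumes A2_int: "\<And>x. integrable \<Xi> (gradF x)"
    and A2_unbiased: "\<And>x. (\<integral>s. gradF x s \<partial>\<Xi>) = gradf x"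
    and A2_var: "\<And>x. (\<integral>\<^sup>+ s. ennreal ((norm (gradF x s - gradf x))\<^sup>2) \<partial>\<Xi>) \<le> ennreal (\<sigma>\<^sup>2)"
    and A4: "\<And>x y. (\<integral>\<^sup>+ s. ennreal ((norm (gradF x s - gradF y s))\<^sup>2) \<partial>\<Xi>)
                   \<le> ennreal (Lf\<^sup>2 * (norm (x - y))\<^sup>2)"
begin

lemma borel_measurable_gradF: "gradF x \<in> borel_measurable \<Xi>"
  using A2_int by auto

lemma
  shows integrable_noise_sq: "integrable \<Xi> (\<lambda>s. (norm (gradF x s - gradf x))\<^sup>2)"
    and integral_noise_sq_le: "(\<integral>s. (norm (gradF x s - gradf x))\<^sup>2 \<partial>\<Xi>) \<le> \<sigma>\<^sup>2"
  using integrable_if_nn_integral_le[OF _ _ A2_var] integral_le_if_nn_integral_le[OF _ _ A2_var]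
    borel_measurable_gradF by auto

lemma
  shows integrable_gradF_diff_sq: "integrable \<Xi> (\<lambda>s. (norm (gradF x s - gradF y s))\<^sup>2)"
    and integral_gradF_diff_sq_le: "(\<integral>s. (norm (gradF x s - gradF y s))\<^sup>2 \<partial>\<Xi>) \<le> Lf\<^sup>2 * (norm (x - y))\<^sup>2"
  using integrable_if_nn_integral_le[OF _ _ A4] integral_le_if_nn_integral_le[OF _ _ A4]
    borel_measurable_gradF by auto

text \<open>The new error is \<open>(1 - \<alpha>) (d - \<nabla>f x) + V\<close> with a noise term \<open>V\<close> of mean zero, so the cross term
  vanishes in expectation.\<close>

lemma momentum_error_second_moment:
  assumes \<alpha>: "0 \<le> \<alpha>" "\<alpha> \<le> 1"
  shows "(\<integral>\<^sup>+s. ennreal ((norm (gradF x' s + (1 - \<alpha>) *\<^sub>R (d - gradF x s) - gradf x'))\<^sup>2) \<partial>\<Xi>)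
     \<le> ennreal ((1 - \<alpha>)\<^sup>2 * (norm (d - gradf x))\<^sup>2 + 2 * \<alpha>\<^sup>2 * \<sigma>\<^sup>2 + 2 * (1 - \<alpha>)\<^sup>2 * Lf\<^sup>2 * (norm (x' - x))\<^sup>2)"
proof -
  define u where "u = (1 - \<alpha>) *\<^sub>R (d - gradf x)"
  define A where "A s = gradF x' s - gradf x'" for s
  define P where "P s = gradF x' s - gradF x s" for s
  define B where "B s = P s - Xi.expectation P" for s
  define V where "V s = \<alpha> *\<^sub>R A s + (1 - \<alpha>) *\<^sub>R B s" for s
  have EP: "Xi.expectation P = gradf x' - gradf x"
    unfolding P_def using A2_int A2_unbiased by (simp add: Xi.prob_space)
  have eq: "gradF x' s + (1 - \<alpha>) *\<^sub>R (d - gradF x s) - gradf x' = u + V s" for s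
    by (simp add: u_def V_def A_def B_def EP P_def algebra_simps)
  have intA: "integrable \<Xi> A" and intP: "integrable \<Xi> P"
    unfolding A_def P_def using A2_int by auto
  have sqA: "integrable \<Xi> (\<lambda>s. (norm (A s))\<^sup>2)" and sqP: "integrable \<Xi> (\<lambda>s. (norm (P s))\<^sup>2)"
    unfolding A_def P_def by (rule integrable_noise_sq integrable_gradF_diff_sq)+
  have sqB: "integrable \<Xi> (\<lambda>s. (norm (B s))\<^sup>2)"
    unfolding B_def by (rule Xi.integrable_norm_sq_centered[OF intP sqP])
  have EB: "Xi.expectation (\<lambda>s. (norm (B s))\<^sup>2) \<le> Lf\<^sup>2 * (norm (x' - x))\<^sup>2"
    using Xi.expectation_norm_sq_centered_le[OF intP sqP] integral_gradF_diff_sq_le[of x' x]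
    unfolding B_def P_def by linarith
  have intV: "integrable \<Xi> V" unfolding V_def B_def using intA intP by auto
  have meanV: "Xi.expectation V = 0"
    unfolding V_def B_def A_def using A2_int A2_unbiased intP by (simp add: Xi.prob_space)
  have Vbd: "(norm (V s))\<^sup>2 \<le> 2 * \<alpha>\<^sup>2 * (norm (A s))\<^sup>2 + 2 * (1 - \<alpha>)\<^sup>2 * (norm (B s))\<^sup>2" for s
    using power2_norm_add_le[of "\<alpha> *\<^sub>R A s" "(1 - \<alpha>) *\<^sub>R B s"] \<alpha> by (simp add: V_def power_mult_distrib)
  have sqV: "integrable \<Xi> (\<lambda>s. (norm (V s))\<^sup>2)"
    by (rule Bochner_Integration.integrable_bound[of _ "\<lambda>s. 2 * \<alpha>\<^sup>2 * (norm (A s))\<^sup>2 + 2 * (1 - \<alpha>)\<^sup>2 * (norm (B s))\<^sup>2"])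
      (use sqA sqB intV Vbd in auto)
  have "Xi.expectation (\<lambda>s. (norm (V s))\<^sup>2)
      \<le> Xi.expectation (\<lambda>s. 2 * \<alpha>\<^sup>2 * (norm (A s))\<^sup>2 + 2 * (1 - \<alpha>)\<^sup>2 * (norm (B s))\<^sup>2)"
    by (rule integral_mono) (use sqV sqA sqB Vbd in auto)
  also have "\<dots> \<le> 2 * \<alpha>\<^sup>2 * \<sigma>\<^sup>2 + 2 * (1 - \<alpha>)\<^sup>2 * (Lf\<^sup>2 * (norm (x' - x))\<^sup>2)"
    using sqA sqB integral_noise_sq_le[of x'] EB unfolding A_def
    by (simp, intro add_mono mult_left_mono) auto
  finally have EV: "Xi.expectation (\<lambda>s. (norm (V s))\<^sup>2) \<le> \<dots>" .
  have "(\<integral>\<^sup>+s. ennreal ((norm (gradF x' s + (1 - \<alpha>) *\<^sub>R (d - gradF x s) - gradf x'))\<^sup>2) \<partial>\<Xi>)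
      = ennreal (Xi.expectation (\<lambda>s. (norm (u + V s))\<^sup>2))"
    unfolding eq using Xi.integrable_norm_sq_shift[OF intV sqV meanV] by (intro nn_integral_eq_integral) auto
  also have "\<dots> \<le> ennreal ((1 - \<alpha>)\<^sup>2 * (norm (d - gradf x))\<^sup>2 + 2 * \<alpha>\<^sup>2 * \<sigma>\<^sup>2 + 2 * (1 - \<alpha>)\<^sup>2 * Lf\<^sup>2 * (norm (x' - x))\<^sup>2)"
    using Xi.expectation_norm_sq_shift[OF intV sqV meanV] EV \<alpha>
    by (intro ennreal_leI) (simp add: u_def power_mult_distrib)
  finally show ?thesis .
qed

end

lemma sum_weighted_telescope_le:
  fixes m b :: "nat \<Rightarrow> real"
  assumes "\<And>k. m (Suc k) \<le> m k" "\<And>k. 0 \<le> b k"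
  shows "(\<Sum>k<K. m k * (b k - b (Suc k))) \<le> m 0 * b 0 - m K * b K"
proof (induction K)
  case (Suc K)
  have "m (Suc K) * b (Suc K) \<le> m K * b (Suc K)" using assms by (rule mult_right_mono)
  then show ?case using Suc by (simp add: algebra_simps)
qed simp

section \<open>Independent samples\<close>

lemma (in prob_space) nn_integral_indep_var:
  assumes ind: "indep_var N1 Y1 N2 Y2" and psi: "\<psi> \<in> borel_measurable (N1 \<Otimes>\<^sub>M N2)"
  shows "(\<integral>\<^sup>+\<omega>. \<psi> (Y1 \<omega>, Y2 \<omega>) \<partial>M) = (\<integral>\<^sup>+\<omega>. (\<integral>\<^sup>+\<omega>'. \<psi> (Y1 \<omega>, Y2 \<omega>') \<partial>M) \<partial>M)"
proof -
  have rv: "Y1 \<in> M \<rightarrow>\<^sub>M N1" "Y2 \<in> M \<rightarrow>\<^sub>M N2"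
    and eq: "distr M N1 Y1 \<Otimes>\<^sub>M distr M N2 Y2 = distr M (N1 \<Otimes>\<^sub>M N2) (\<lambda>x. (Y1 x, Y2 x))"
    using ind[unfolded indep_var_distribution_eq] by auto
  interpret Y2: prob_space "distr M N2 Y2" by (rule prob_space_distr[OF rv(2)])
  have "sets (distr M N1 Y1 \<Otimes>\<^sub>M distr M N2 Y2) = sets (N1 \<Otimes>\<^sub>M N2)"
    by (rule sets_pair_measure_cong) auto
  then have psi': "\<psi> \<in> borel_measurable (distr M N1 Y1 \<Otimes>\<^sub>M distr M N2 Y2)"
    using psi measurable_cong_sets by blast
  have "(\<integral>\<^sup>+\<omega>. \<psi> (Y1 \<omega>, Y2 \<omega>) \<partial>M) = integral\<^sup>N (distr M (N1 \<Otimes>\<^sub>M N2) (\<lambda>x. (Y1 x, Y2 x))) \<psi>"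
    by (rule nn_integral_distr[symmetric]) (use rv psi in auto)
  also have "\<dots> = (\<integral>\<^sup>+y. \<integral>\<^sup>+t. \<psi> (y, t) \<partial>distr M N2 Y2 \<partial>distr M N1 Y1)"
    unfolding eq[symmetric] by (rule Y2.nn_integral_fst[symmetric, OF psi'])
  also have "\<dots> = (\<integral>\<^sup>+\<omega>. (\<integral>\<^sup>+t. \<psi> (Y1 \<omega>, t) \<partial>distr M N2 Y2) \<partial>M)"
    by (rule nn_integral_distr[OF rv(1)]) (use Y2.borel_measurable_nn_integral_fst[OF psi'] in simp)
  also have "\<dots> = (\<integral>\<^sup>+\<omega>. (\<integral>\<^sup>+\<omega>'. \<psi> (Y1 \<omega>, Y2 \<omega>') \<partial>M) \<partial>M)"
    using measurable_Pair2[OF psi measurable_space[OF rv(1)]]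
    by (intro nn_integral_cong nn_integral_distr[OF rv(2)]) simp
  finally show ?thesis .
qed

lemma measurable_triple:
  fixes a :: "'q \<Rightarrow> 'a::second_countable_topology" and b :: "'q \<Rightarrow> 'b::second_countable_topology"
    and e :: "'q \<Rightarrow> 'c::second_countable_topology"
  assumes "a \<in> borel_measurable N" "b \<in> borel_measurable N" "e \<in> borel_measurable N"
  shows "(\<lambda>t. (a t, b t, e t)) \<in> borel_measurable N"
  using assms by (simp add: borel_prod[symmetric])

section \<open>The MoSSP-R iteration\<close>

text \<open>The samples are \<open>Xs (Inl j)\<close> for the initial batch (\<open>j < b0\<close>) and \<open>Xs (Inr k)\<close> for step \<open>k \<ge> 1\<close>.\<close>

locale mossp_r =
  constraint_map c Dc G C Lc + stochastic_gradient \<Xi> gradF gradf \<sigma> Lf + M: prob_space M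
  for c :: "'a::euclidean_space \<Rightarrow> 'b::euclidean_space" and Dc G C Lc
    and \<Xi> :: "'s measure" and gradF gradf \<sigma> Lf and M :: "'m measure" +
  fixes f h g :: "'a \<Rightarrow> real"
    and b0 :: nat and Xs :: "nat + nat \<Rightarrow> 'm \<Rightarrow> 's"
    and x z d :: "nat \<Rightarrow> 'm \<Rightarrow> 'a" and x0 :: 'a
    and \<alpha> \<mu> \<rho> :: "nat \<Rightarrow> real" and \<beta> \<mu>bar :: real
  assumes gradF_meas: "(\<lambda>(x, s). gradF x s) \<in> borel_measurable (borel \<Otimes>\<^sub>M \<Xi>)"
    and f_grad: "\<And>x. (f has_derivative (\<lambda>v. gradf x \<bullet> v)) (at x)"
    and f_smooth: "\<And>x y. norm (gradf x - gradf y) \<le> Lf * norm (x - y)"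
    and h_convex: "convex_on UNIV h" and g_convex: "convex_on UNIV g"
    and gradf_bd: "\<And>x. norm (gradf x) \<le> G"
    and h_subgrad_bd: "\<And>x v. v \<in> subdiff h x \<Longrightarrow> norm v \<le> G"
    and g_subgrad_bd: "\<And>x v. v \<in> subdiff g x \<Longrightarrow> norm v \<le> G"
    and Fstar_finite: "bdd_below (range (\<lambda>x. f x + h x - g x))"
    and rho0_pos: "\<rho> 0 > 0"
    and mu_pos: "\<And>k. \<mu> k > 0"
    and step: "\<And>k. \<mu> k * (\<rho> k * (Lf / \<rho> 0 + G\<^sup>2 + C * Lc)) \<le> 1 / 4"
    and mu_mono: "\<And>k. \<mu> (Suc k) \<le> \<mu> k"
    and rho_mono: "\<And>k. \<rho> k \<le> \<rho> (Suc k)"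
    and beta: "0 < \<beta>" "\<beta> \<le> 1"
    and alpha: "\<And>k. 0 < 32 * (\<mu> k)\<^sup>2 * Lf\<^sup>2" "\<And>k. 32 * (\<mu> k)\<^sup>2 * Lf\<^sup>2 \<le> \<alpha> k" "\<And>k. \<alpha> k \<le> 1"
    and mubar: "\<And>k. \<mu> k \<le> \<mu>bar"
    and b0_pos: "b0 \<ge> 1"
    and Xs_indep: "M.indep_vars (\<lambda>_. \<Xi>) Xs (Inl ` {..<b0} \<union> Inr ` {1..})"
    and Xs_distr: "\<And>i. i \<in> Inl ` {..<b0} \<union> Inr ` {1..} \<Longrightarrow> distr M \<Xi> (Xs i) = \<Xi>"
    and x_0: "\<And>\<omega>. x 0 \<omega> = x0" and z_0: "\<And>\<omega>. z 0 \<omega> = x0"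
    and d_0: "\<And>\<omega>. d 0 \<omega> = (1 / real b0) *\<^sub>R (\<Sum>j<b0. gradF x0 (Xs (Inl j) \<omega>))"
    and d_Suc: "\<And>k \<omega>. d (Suc k) \<omega> = gradF (x (Suc k) \<omega>) (Xs (Inr (Suc k)) \<omega>)
                  + (1 - \<alpha> k) *\<^sub>R (d k \<omega> - gradF (x k \<omega>) (Xs (Inr (Suc k)) \<omega>))"
    and x_Suc: "\<And>k \<omega>. x (Suc k) \<omega> = prox (\<mu> k) h
                  (z k \<omega> - \<mu> k *\<^sub>R (d k \<omega> + \<rho> k *\<^sub>R gradc Dc (x k \<omega>) (c (x k \<omega>))))"
    and z_Suc: "\<And>k \<omega>. z (Suc k) \<omega> = z k \<omega> - \<beta> *\<^sub>R (prox (\<mu> k) g (z k \<omega>) - x (Suc k) \<omega>)"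
begin

lemma Lf_nonneg: "Lf \<ge> 0"
proof -
  obtain b :: 'a where "b \<in> Basis" using nonempty_Basis by blast
  then have "0 < norm (0 - b)" by auto
  moreover have "0 \<le> Lf * norm (0 - b)" using f_smooth[of 0 b] norm_ge_zero order_trans by blast
  ultimately show ?thesis by (simp add: zero_le_mult_iff)
qed

lemma rho0_le: "\<rho> 0 \<le> \<rho> k"
  using lift_Suc_mono_le[of \<rho>, OF rho_mono] by simp

lemma rho_pos: "\<rho> k > 0"
  using rho0_le[of k] rho0_pos by simp

lemma mu_le_mu0: "\<mu> k \<le> \<mu> 0"
  using lift_Suc_antimono_le[of \<mu>, OF mu_mono] by simp

lemma alpha_pos: "\<alpha> k > 0"
  using less_le_trans[OF alpha(1)[of k] alpha(2)[of k]] .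

text \<open>Since \<open>\<rho> 0 \<le> \<rho> k\<close>, the step-size condition bounds \<open>\<mu> k\<close> times the smoothness constant of \<open>Qpen f c (\<rho> k)\<close>.\<close>

lemma step_size_le: "\<mu> k * (Lf + \<rho> k * (C * Lc + G\<^sup>2)) \<le> 1 / 4"
proof -
  have "Lf \<le> \<rho> k * (Lf / \<rho> 0)"
    using mult_left_mono[OF rho0_le Lf_nonneg, of k] rho0_pos by (simp add: field_simps)
  then have "Lf + \<rho> k * (C * Lc + G\<^sup>2) \<le> \<rho> k * (Lf / \<rho> 0 + G\<^sup>2 + C * Lc)"
    by (simp add: algebra_simps)
  then show ?thesis
    using step[of k] mult_left_mono[of _ _ "\<mu> k"] mu_pos[of k] by (meson less_imp_le order_trans)
qed

lemma continuous_on_gradf: "continuous_on S gradf"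
  by (rule lipschitz_on_continuous_on[of Lf], rule lipschitz_onI)
    (use f_smooth Lf_nonneg in \<open>auto simp: dist_norm\<close>)

definition state :: "nat \<Rightarrow> 'm \<Rightarrow> 'a \<times> 'a \<times> 'a" where
  "state k \<omega> = (x k \<omega>, z k \<omega>, d k \<omega>)"

definition x_update :: "nat \<Rightarrow> 'a \<times> 'a \<times> 'a \<Rightarrow> 'a" where
  "x_update k s = prox (\<mu> k) h (fst (snd s) - \<mu> k *\<^sub>R (snd (snd s) + \<rho> k *\<^sub>R gradc Dc (fst s) (c (fst s))))"

definition z_update :: "nat \<Rightarrow> 'a \<times> 'a \<times> 'a \<Rightarrow> 'a" where
  "z_update k s = fst (snd s) - \<beta> *\<^sub>R (prox (\<mu> k) g (fst (snd s)) - x_update k s)"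

lemma state_simps[simp]:
  "fst (state k \<omega>) = x k \<omega>" "fst (snd (state k \<omega>)) = z k \<omega>" "snd (snd (state k \<omega>)) = d k \<omega>"
  by (simp_all add: state_def)

lemma x_Suc_update: "x (Suc k) \<omega> = x_update k (state k \<omega>)"
  by (simp add: x_Suc x_update_def state_def)

lemma z_Suc_update: "z (Suc k) \<omega> = z_update k (state k \<omega>)"
  by (simp add: z_Suc z_update_def x_Suc_update state_def)

lemma continuous_on_x_update: "continuous_on UNIV (x_update k)"
proof -
  have "continuous_on UNIV (\<lambda>s::'a \<times> 'a \<times> 'a. gradc Dc (fst s) (c (fst s)))"
    by (rule continuous_on_compose2[OF continuous_on_gradc_c continuous_on_fst]) auto
  then have "continuous_on UNIV (\<lambda>s::'a \<times> 'a \<times> 'a.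
      fst (snd s) - \<mu> k *\<^sub>R (snd (snd s) + \<rho> k *\<^sub>R gradc Dc (fst s) (c (fst s))))"
    by (intro continuous_intros)
  then show ?thesis unfolding x_update_def[abs_def]
    by (rule continuous_on_compose2[OF continuous_on_prox[OF h_convex mu_pos]]) auto
qed

lemma continuous_on_z_update: "continuous_on UNIV (z_update k)"
proof -
  have "continuous_on UNIV (\<lambda>s::'a \<times> 'a \<times> 'a. prox (\<mu> k) g (fst (snd s)))"
    by (rule continuous_on_compose2[OF continuous_on_prox[OF g_convex mu_pos]])
      (auto intro!: continuous_intros)
  then show ?thesis unfolding z_update_def[abs_def]
    by (intro continuous_intros continuous_on_x_update)
qed

lemma borel_measurable_gradf[measurable]: "gradf \<in> borel_measurable borel"
  by (rule borel_measurable_continuous_onI[OF continuous_on_gradf])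

lemma measurable_gradF_comp[measurable (raw)]:
  assumes "a \<in> borel_measurable N" and "b \<in> N \<rightarrow>\<^sub>M \<Xi>"
  shows "(\<lambda>t. gradF (a t) (b t)) \<in> borel_measurable N"
  using measurable_compose[OF measurable_Pair[OF assms] gradF_meas] by simp

definition sample_indices :: "(nat + nat) set" where
  "sample_indices = Inl ` {..<b0} \<union> Inr ` {1..}"

definition past_indices :: "nat \<Rightarrow> (nat + nat) set" where
  "past_indices k = Inl ` {..<b0} \<union> Inr ` {1..k}"

definition past_samples :: "nat \<Rightarrow> 'm \<Rightarrow> (nat + nat \<Rightarrow> 's)" where
  "past_samples k \<omega> = restrict (\<lambda>i. Xs i \<omega>) (past_indices k)"

lemma past_indices_subset: "past_indices k \<subseteq> sample_indices"
  by (auto simp: past_indices_def sample_indices_def)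

lemma past_indices_mono: "past_indices k \<subseteq> past_indices (Suc k)"
  by (auto simp: past_indices_def)

lemma fresh_index_in_past: "Inr (Suc k) \<in> past_indices (Suc k)"
  by (auto simp: past_indices_def)

lemma fresh_index_notin_past: "Inr (Suc k) \<notin> past_indices k"
  by (auto simp: past_indices_def)

lemma fresh_index_in_samples: "Inr (Suc k) \<in> sample_indices"
  by (auto simp: sample_indices_def)

lemma measurable_Xs: "i \<in> sample_indices \<Longrightarrow> Xs i \<in> M \<rightarrow>\<^sub>M \<Xi>"
  using Xs_indep unfolding M.indep_vars_def sample_indices_def by auto

lemma distr_Xs: "i \<in> sample_indices \<Longrightarrow> distr M \<Xi> (Xs i) = \<Xi>"
  using Xs_distr by (simp add: sample_indices_def)

lemma measurable_past_samples: "past_samples k \<in> M \<rightarrow>\<^sub>M PiM (past_indices k) (\<lambda>_. \<Xi>)"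
  unfolding past_samples_def[abs_def]
  by (rule measurable_restrict) (use measurable_Xs past_indices_subset in auto)

lemma state_measurable_in_past:
  "\<exists>\<Phi>. \<Phi> \<in> PiM (past_indices k) (\<lambda>_. \<Xi>) \<rightarrow>\<^sub>M borel \<and> (\<forall>\<omega>. state k \<omega> = \<Phi> (past_samples k \<omega>))"
proof (induction k)
  case 0
  define \<Phi> where "\<Phi> t = (x0, x0, (1 / real b0) *\<^sub>R (\<Sum>j<b0. gradF x0 (t (Inl j))))" for t :: "nat + nat \<Rightarrow> 's"
  have "\<Phi> \<in> PiM (past_indices 0) (\<lambda>_. \<Xi>) \<rightarrow>\<^sub>M borel"
    unfolding \<Phi>_def
  proof (intro measurable_triple measurable_const borel_measurable_scaleR borel_measurable_sum
      measurable_gradF_comp)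
    show "(\<lambda>t. t (Inl j)) \<in> PiM (past_indices 0) (\<lambda>_. \<Xi>) \<rightarrow>\<^sub>M \<Xi>" if "j \<in> {..<b0}" for j
      using that by (intro measurable_component_singleton) (auto simp: past_indices_def)
  qed auto
  moreover have "state 0 \<omega> = \<Phi> (past_samples 0 \<omega>)" for \<omega>
    by (simp add: \<Phi>_def state_def x_0 z_0 d_0 past_samples_def past_indices_def)
  ultimately show ?case by blast
next
  case (Suc k)
  then obtain \<Phi> where \<Phi>: "\<Phi> \<in> PiM (past_indices k) (\<lambda>_. \<Xi>) \<rightarrow>\<^sub>M borel"
    "\<And>\<omega>. state k \<omega> = \<Phi> (past_samples k \<omega>)" by blast
  let ?P = "PiM (past_indices (Suc k)) (\<lambda>_. \<Xi>)"
  define P where "P t = \<Phi> (restrict t (past_indices k))" for t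
  define \<Psi> where "\<Psi> t = (x_update k (P t), z_update k (P t),
      gradF (x_update k (P t)) (t (Inr (Suc k)))
        + (1 - \<alpha> k) *\<^sub>R (snd (snd (P t)) - gradF (fst (P t)) (t (Inr (Suc k)))))" for t
  have P: "P \<in> ?P \<rightarrow>\<^sub>M borel"
    unfolding P_def by (rule measurable_compose[OF measurable_restrict_subset[OF past_indices_mono] \<Phi>(1)])
  have "\<Psi> \<in> ?P \<rightarrow>\<^sub>M borel"
    unfolding \<Psi>_def
    by (intro measurable_triple borel_measurable_add borel_measurable_scaleR borel_measurable_diff
        measurable_gradF_comp measurable_component_singleton fresh_index_in_past measurable_const
        borel_measurable_continuous_on[OF _ P] continuous_on_x_update continuous_on_z_update
        continuous_intros)
  moreover have "state (Suc k) \<omega> = \<Psi> (past_samples (Suc k) \<omega>)" for \<omega>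
  proof -
    have "restrict (past_samples (Suc k) \<omega>) (past_indices k) = past_samples k \<omega>"
      using past_indices_mono by (auto simp: past_samples_def restrict_def fun_eq_iff)
    then have "P (past_samples (Suc k) \<omega>) = state k \<omega>" by (simp add: P_def \<Phi>(2))
    then show ?thesis using fresh_index_in_past[of k]
      by (simp add: \<Psi>_def state_def x_Suc_update z_Suc_update d_Suc past_samples_def)
  qed
  ultimately show ?case by blast
qed

lemma measurable_state: "state k \<in> borel_measurable M"
proof -
  obtain \<Phi> where \<Phi>: "\<Phi> \<in> PiM (past_indices k) (\<lambda>_. \<Xi>) \<rightarrow>\<^sub>M borel"
    "\<And>\<omega>. state k \<omega> = \<Phi> (past_samples k \<omega>)"
    using state_measurable_in_past[of k] by blast
  then have "state k = (\<lambda>\<omega>. \<Phi> (past_samples k \<omega>))" by (simp add: fun_eq_iff)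
  with measurable_compose[OF measurable_past_samples \<Phi>(1)] show ?thesis by simp
qed

lemma
  shows borel_measurable_x[measurable]: "x k \<in> borel_measurable M"
    and borel_measurable_z[measurable]: "z k \<in> borel_measurable M"
    and borel_measurable_d[measurable]: "d k \<in> borel_measurable M"
proof -
  have "(\<lambda>\<omega>. F (state k \<omega>)) \<in> borel_measurable M" if "continuous_on UNIV F" for F :: "_ \<Rightarrow> 'a"
    by (rule borel_measurable_continuous_on[OF that measurable_state])
  from this[of fst] this[of "\<lambda>s. fst (snd s)"] this[of "\<lambda>s. snd (snd s)"]
  show "x k \<in> borel_measurable M" "z k \<in> borel_measurable M" "d k \<in> borel_measurable M"
    by (simp_all add: state_def continuous_intros)
qed

text \<open>The sample \<open>Xs (Inr (Suc k))\<close> is independent of the state at step \<open>k\<close>, which depends only on the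
  past samples.\<close>

lemma nn_integral_fresh_sample:
  assumes phi: "\<phi> \<in> borel_measurable (borel \<Otimes>\<^sub>M \<Xi>)"
  shows "(\<integral>\<^sup>+\<omega>. \<phi> (state k \<omega>, Xs (Inr (Suc k)) \<omega>) \<partial>M) = (\<integral>\<^sup>+\<omega>. (\<integral>\<^sup>+s. \<phi> (state k \<omega>, s) \<partial>\<Xi>) \<partial>M)"
proof -
  let ?i = "Inr (Suc k) :: nat + nat"
  let ?fresh = "\<lambda>\<omega>. restrict (\<lambda>j. Xs j \<omega>) {?i}"
  obtain \<Phi> where \<Phi>: "\<Phi> \<in> PiM (past_indices k) (\<lambda>_. \<Xi>) \<rightarrow>\<^sub>M borel"
    "\<And>\<omega>. state k \<omega> = \<Phi> (past_samples k \<omega>)"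
    using state_measurable_in_past[of k] by blast
  have Xi: "Xs ?i \<in> M \<rightarrow>\<^sub>M \<Xi>" by (rule measurable_Xs[OF fresh_index_in_samples])
  have ind: "M.indep_var (PiM (past_indices k) (\<lambda>_. \<Xi>)) (past_samples k) (PiM {?i} (\<lambda>_. \<Xi>)) ?fresh"
    unfolding past_samples_def[abs_def]
    using fresh_index_notin_past[of k] past_indices_subset fresh_index_in_samples Xs_indep
    by (intro M.indep_var_restrict) (auto simp: sample_indices_def)
  have "(\<lambda>p. (\<Phi> (fst p), snd p ?i)) \<in> PiM (past_indices k) (\<lambda>_. \<Xi>) \<Otimes>\<^sub>M PiM {?i} (\<lambda>_. \<Xi>) \<rightarrow>\<^sub>M borel \<Otimes>\<^sub>M \<Xi>"
    by (intro measurable_Pair measurable_compose[OF measurable_fst \<Phi>(1)]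
        measurable_compose[OF measurable_snd measurable_component_singleton]) simp
  from M.nn_integral_indep_var[OF ind measurable_compose[OF this phi]]
  have "(\<integral>\<^sup>+\<omega>. \<phi> (state k \<omega>, Xs ?i \<omega>) \<partial>M) = (\<integral>\<^sup>+\<omega>. (\<integral>\<^sup>+\<omega>'. \<phi> (state k \<omega>, Xs ?i \<omega>') \<partial>M) \<partial>M)"
    by (simp add: \<Phi>(2))
  also have "\<dots> = (\<integral>\<^sup>+\<omega>. (\<integral>\<^sup>+s. \<phi> (state k \<omega>, s) \<partial>\<Xi>) \<partial>M)"
  proof (intro nn_integral_cong)
    fix \<omega>
    have "(\<lambda>s. \<phi> (state k \<omega>, s)) \<in> borel_measurable \<Xi>" using measurable_Pair2[OF phi] by simp
    then show "(\<integral>\<^sup>+\<omega>'. \<phi> (state k \<omega>, Xs ?i \<omega>') \<partial>M) = (\<integral>\<^sup>+s. \<phi> (state k \<omega>, s) \<partial>\<Xi>)"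
      using nn_integral_distr[OF Xi, of "\<lambda>s. \<phi> (state k \<omega>, s)"]
      by (simp add: distr_Xs[OF fresh_index_in_samples])
  qed
  finally show ?thesis .
qed

definition Lstar :: real where
  "Lstar = Fstar f h g - G\<^sup>2 * \<mu>bar / 2"

lemma potential_ge_Lstar:
  assumes "r \<ge> 0" and "m > 0"
  shows "Lstar \<le> Lpot f c h g r m x' z'"
proof -
  have "Fstar f h g \<le> f x' + h x' - g x'" unfolding Fstar_def by (rule cINF_lower[OF Fstar_finite]) simp
  moreover have "moreau m g z' \<le> g x' + (norm (x' - z'))\<^sup>2 / (2 * m)" by (rule moreau_le[OF g_convex \<open>m > 0\<close>])
  moreover have "f x' \<le> Qpen f c r x'" using \<open>r \<ge> 0\<close> by (simp add: Qpen_def)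
  moreover have "0 \<le> G\<^sup>2 * \<mu>bar / 2" using mubar[of 0] mu_pos[of 0] by simp
  ultimately show ?thesis unfolding Lpot_def Lstar_def by linarith
qed

lemma potential_x_step:
  "Lpot f c h g (\<rho> k) (\<mu> k) (x_update k (x', z', d')) z'
     \<le> Lpot f c h g (\<rho> k) (\<mu> k) x' z' - (norm (x_update k (x', z', d') - x'))\<^sup>2 / (8 * \<mu> k)
        + \<mu> k * (norm (d' - gradf x'))\<^sup>2"
proof -
  define m r where "m = \<mu> k" and "r = \<rho> k"
  have m: "m > 0" and r: "r \<ge> 0" using mu_pos rho_pos[of k] by (auto simp: m_def r_def)
  define D where "D = d' + r *\<^sub>R gradc Dc x' (c x')"
  define e u xn where "e = d' - gradf x'" and "u = z' - m *\<^sub>R D" and "xn = x_update k (x', z', d')"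
  define N where "N = (norm (xn - x'))\<^sup>2"
  have three: "h xn + (norm (xn - u))\<^sup>2 / (2 * m) + (norm (x' - xn))\<^sup>2 / (2 * m) \<le> h x' + (norm (x' - u))\<^sup>2 / (2 * m)"
    using prox_three_point[OF h_convex m] by (simp add: xn_def x_update_def u_def D_def m_def r_def)
  have "gradQ gradf Dc c r x' = D - e" by (simp add: gradQ_def D_def e_def)
  then have descent: "Qpen f c r xn \<le> Qpen f c r x' + (D - e) \<bullet> (xn - x') + (Lf + r * (C * Lc + G\<^sup>2)) / 2 * N"
    using Qpen_descent[OF f_grad f_smooth r, where x=x' and y=xn] by (simp only: N_def)
  have expand: "(norm (p - u))\<^sup>2 / (2 * m) = (norm (p - z'))\<^sup>2 / (2 * m) + (p - z') \<bullet> D + m / 2 * (norm D)\<^sup>2" for p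
  proof -
    have "p - u = (p - z') + m *\<^sub>R D" by (simp add: u_def)
    then have "(norm (p - u))\<^sup>2 = (norm (p - z'))\<^sup>2 + 2 * m * ((p - z') \<bullet> D) + m\<^sup>2 * (norm D)\<^sup>2"
      by (simp only: power2_norm_add_scaleR)
    then show ?thesis using m by (simp add: field_simps power2_eq_square)
  qed
  have young: "- (e \<bullet> (xn - x')) \<le> m * (norm e)\<^sup>2 + N / (4 * m)"
    using norm_cauchy_schwarz[of "- e" "xn - x'"] product_le_weighted_squares[OF m, of "norm e" "norm (xn - x')"]
    by (simp add: N_def)
  have "(Lf + r * (C * Lc + G\<^sup>2)) / 2 * N \<le> N / (8 * m)"
  proof -
    have "Lf + r * (C * Lc + G\<^sup>2) \<le> 1 / (4 * m)"
      using step_size_le[of k] m by (simp add: m_def r_def field_simps)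
    then have "(Lf + r * (C * Lc + G\<^sup>2)) / 2 * N \<le> 1 / (4 * m) / 2 * N"
      by (intro mult_right_mono divide_right_mono) (auto simp: N_def)
    then show ?thesis by simp
  qed
  moreover have "(xn - z') \<bullet> D - (x' - z') \<bullet> D = (D - e) \<bullet> (xn - x') + e \<bullet> (xn - x')"
    by (simp add: inner_diff_left inner_diff_right inner_commute)
  moreover have "(norm (x' - xn))\<^sup>2 = N" by (simp add: N_def norm_minus_commute)
  moreover have "N / (4 * m) + N / (8 * m) - N / (2 * m) = - (N / (8 * m))" using m by (simp add: field_simps)
  ultimately show ?thesis
    unfolding Lpot_def xn_def[symmetric] m_def[symmetric] r_def[symmetric] N_def[symmetric] e_def[symmetric]
    using three descent expand[of xn] expand[of x'] young by (simp add: inner_commute)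
qed

text \<open>By \<open>moreau_subgradient\<close> the envelope can drop along the relaxed step at most by its linearisation,
  and for \<open>\<beta> \<le> 1\<close> this drop is paid for by the decrease of \<open>\<parallel>x' - z'\<parallel>\<^sup>2 / (2 m)\<close>.\<close>

lemma potential_z_step:
  assumes m: "m > 0"
  shows "Lpot f c h g r m x' (z' - \<beta> *\<^sub>R (prox m g z' - x')) \<le> Lpot f c h g r m x' z'"
proof -
  define p w where "p = prox m g z'" and "w = prox m g z' - x'"
  define zn where "zn = z' - \<beta> *\<^sub>R w"
  have "moreau m g z' + ((1 / m) *\<^sub>R (z' - p)) \<bullet> (zn - z') \<le> moreau m g zn"
    using subdiffD[OF moreau_subgradient[OF g_convex m]] by (simp add: p_def)
  then have moreau_step: "moreau m g z' - \<beta> * ((z' - p) \<bullet> w) / m \<le> moreau m g zn"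
    by (simp add: zn_def inner_diff_right)
  have "(norm (x' - zn))\<^sup>2 = (norm (x' - z'))\<^sup>2 + 2 * \<beta> * ((x' - z') \<bullet> w) + \<beta>\<^sup>2 * (norm w)\<^sup>2"
    using power2_norm_add_scaleR[of "x' - z'" \<beta> w] by (simp add: zn_def algebra_simps)
  also have "(x' - z') \<bullet> w = - (norm w)\<^sup>2 - (z' - p) \<bullet> w"
    by (simp add: w_def p_def power2_norm_eq_inner inner_diff_left)
  also have "\<beta>\<^sup>2 * (norm w)\<^sup>2 \<le> 2 * \<beta> * (norm w)\<^sup>2"
    using beta by (intro mult_right_mono) (auto simp: power2_eq_square)
  finally have "(norm (x' - zn))\<^sup>2 \<le> (norm (x' - z'))\<^sup>2 - 2 * \<beta> * ((z' - p) \<bullet> w)"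
    by (simp add: algebra_simps)
  then have "(norm (x' - zn))\<^sup>2 / (2 * m) \<le> (norm (x' - z'))\<^sup>2 / (2 * m) - \<beta> * ((z' - p) \<bullet> w) / m"
    using m by (simp add: field_simps)
  with moreau_step show ?thesis
    unfolding Lpot_def by (simp add: zn_def w_def)
qed

lemma potential_parameter_step:
  assumes r: "r \<le> r'" and m: "0 < m'" "m' \<le> m"
  shows "Lpot f c h g r' m' x' z' \<le> Lpot f c h g r m x' z' + (r' - r) / 2 * C\<^sup>2
           + \<bar>m - m'\<bar> / (2 * m'\<^sup>2) * (C\<^sup>2 + (norm (x' - z'))\<^sup>2)"
proof -
  define N where "N = (norm (x' - z'))\<^sup>2"
  have "(r' - r) / 2 * (norm (c x'))\<^sup>2 \<le> (r' - r) / 2 * C\<^sup>2"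
    using r c_bd[of x'] by (intro mult_left_mono power_mono) auto
  moreover have "r' / 2 * (norm (c x'))\<^sup>2 = r / 2 * (norm (c x'))\<^sup>2 + (r' - r) / 2 * (norm (c x'))\<^sup>2"
    by (simp add: field_simps)
  ultimately have Q: "Qpen f c r' x' \<le> Qpen f c r x' + (r' - r) / 2 * C\<^sup>2"
    unfolding Qpen_def by linarith
  have "N / (2 * m') - N / (2 * m) = (m - m') / (2 * (m * m')) * N" using m by (simp add: field_simps)
  also have "\<dots> \<le> (m - m') / (2 * m'\<^sup>2) * N"
    using m by (intro mult_right_mono divide_left_mono) (auto simp: N_def power2_eq_square)
  finally have "N / (2 * m') - N / (2 * m) \<le> (m - m') / (2 * m'\<^sup>2) * N" .
  moreover have "moreau m g z' \<le> moreau m' g z'" by (rule moreau_antimono[OF g_convex m])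
  moreover have "0 \<le> (m - m') / (2 * m'\<^sup>2) * C\<^sup>2" using m by simp
  moreover have "\<bar>m - m'\<bar> / (2 * m'\<^sup>2) * (C\<^sup>2 + N) = (m - m') / (2 * m'\<^sup>2) * C\<^sup>2 + (m - m') / (2 * m'\<^sup>2) * N"
    using m by (simp add: distrib_left)
  ultimately show ?thesis
    unfolding Lpot_def N_def[symmetric] using Q by linarith
qed

lemma norm_x_update_sub_le:
  "norm (x_update k (x', z', d') - z') \<le> \<mu> k * norm (d' - gradf x') + \<mu> k * (2 * G + \<rho> k * G * C)"
proof -
  define D where "D = d' + \<rho> k *\<^sub>R gradc Dc x' (c x')"
  define u where "u = z' - \<mu> k *\<^sub>R D"
  have "norm (x_update k (x', z', d') - z') \<le> norm (prox (\<mu> k) h u - u) + norm (\<mu> k *\<^sub>R D)"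
    using norm_triangle_ineq4[of "prox (\<mu> k) h u - u" "\<mu> k *\<^sub>R D"]
    by (simp add: x_update_def u_def D_def)
  also have "\<dots> \<le> \<mu> k * G + \<mu> k * norm D"
    using norm_prox_diff_le[OF h_convex h_subgrad_bd mu_pos[of k], where u=u] mu_pos[of k] by simp
  also have "norm D \<le> norm (d' - gradf x') + G + \<rho> k * (G * C)"
  proof -
    have "norm (\<rho> k *\<^sub>R gradc Dc x' (c x')) \<le> \<rho> k * (G * C)"
      using norm_gradc_le[of x' "c x'"] mult_left_mono[OF c_bd G_nonneg, of x'] rho_pos[of k]
      by (simp add: mult_left_mono)
    moreover have "norm D \<le> norm (d' - gradf x') + norm (gradf x') + norm (\<rho> k *\<^sub>R gradc Dc x' (c x'))"
      using norm_triangle_ineq[of "d' - gradf x'" "gradf x'"]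
        norm_triangle_ineq[of d' "\<rho> k *\<^sub>R gradc Dc x' (c x')"] by (simp add: D_def)
    ultimately show ?thesis using gradf_bd[of x'] by linarith
  qed
  then have "\<mu> k * norm D \<le> \<mu> k * (norm (d' - gradf x') + G + \<rho> k * (G * C))"
    using mu_pos[of k] by (intro mult_left_mono) auto
  finally show ?thesis by (simp add: algebra_simps)
qed

lemma norm_x_update_sub_z_update_le:
  "norm (x_update k s - z_update k s) \<le> norm (x_update k s - fst (snd s)) + \<mu> k * G"
proof -
  define z' where "z' = fst (snd s)"
  have "x_update k s - z_update k s = (1 - \<beta>) *\<^sub>R (x_update k s - z') + \<beta> *\<^sub>R (prox (\<mu> k) g z' - z')"
    by (simp add: z_update_def z'_def algebra_simps)
  then have "norm (x_update k s - z_update k s) \<le> (1 - \<beta>) * norm (x_update k s - z') + \<beta> * norm (prox (\<mu> k) g z' - z')"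
    using norm_triangle_ineq[of "(1 - \<beta>) *\<^sub>R (x_update k s - z')" "\<beta> *\<^sub>R (prox (\<mu> k) g z' - z')"] beta
    by simp
  also have "\<dots> \<le> 1 * norm (x_update k s - z') + 1 * (\<mu> k * G)"
    using beta norm_prox_diff_le[OF g_convex g_subgrad_bd mu_pos[of k], where u=z']
    by (intro add_mono mult_mono) auto
  finally show ?thesis by (simp add: z'_def)
qed

definition err_sq :: "nat \<Rightarrow> 'm \<Rightarrow> real" where
  "err_sq k \<omega> = (norm (d k \<omega> - gradf (x k \<omega>)))\<^sup>2"

definition step_sq :: "nat \<Rightarrow> 'm \<Rightarrow> real" where
  "step_sq k \<omega> = (norm (x (Suc k) \<omega> - x k \<omega>))\<^sup>2"

definition gap_sq :: "nat \<Rightarrow> 'm \<Rightarrow> real" where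
  "gap_sq k \<omega> = (norm (x k \<omega> - z k \<omega>))\<^sup>2"

text \<open>\<open>drift k\<close> is \<open>(\<rho>_{k+1} - \<rho>_k) C\<^sup>2 / 2 + \<Delta>_{k+1}\<close>, the price of changing the parameters.\<close>

definition drift :: "nat \<Rightarrow> 'm \<Rightarrow> real" where
  "drift k \<omega> = (\<rho> (Suc k) - \<rho> k) / 2 * C\<^sup>2
     + \<bar>\<mu> k - \<mu> (Suc k)\<bar> / (2 * (\<mu> (Suc k))\<^sup>2) * (C\<^sup>2 + (norm (x (Suc k) \<omega> - z (Suc k) \<omega>))\<^sup>2)"

lemma drift_nonneg: "drift k \<omega> \<ge> 0"
  using rho_mono[of k] mu_pos[of "Suc k"] by (simp add: drift_def)

lemma
  shows borel_measurable_err_sq: "err_sq k \<in> borel_measurable M"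
    and borel_measurable_step_sq: "step_sq k \<in> borel_measurable M"
    and borel_measurable_gap_sq: "gap_sq k \<in> borel_measurable M"
  unfolding err_sq_def[abs_def] step_sq_def[abs_def] gap_sq_def[abs_def] by measurable

lemma step_sq_le: "step_sq k \<omega> \<le> 3 * ((\<mu> k)\<^sup>2 * err_sq k \<omega> + (\<mu> k * (2 * G + \<rho> k * G * C))\<^sup>2 + gap_sq k \<omega>)"
proof -
  have "norm (x (Suc k) \<omega> - x k \<omega>) \<le> norm (x (Suc k) \<omega> - z k \<omega>) + norm (x k \<omega> - z k \<omega>)"
    using norm_triangle_ineq4[of "x (Suc k) \<omega> - z k \<omega>" "x k \<omega> - z k \<omega>"] by simp
  also have "\<dots> \<le> \<mu> k * norm (d k \<omega> - gradf (x k \<omega>)) + \<mu> k * (2 * G + \<rho> k * G * C) + norm (x k \<omega> - z k \<omega>)"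
    using norm_x_update_sub_le by (simp add: x_Suc_update state_def)
  finally have "step_sq k \<omega>
      \<le> (\<mu> k * norm (d k \<omega> - gradf (x k \<omega>)) + \<mu> k * (2 * G + \<rho> k * G * C) + norm (x k \<omega> - z k \<omega>))\<^sup>2"
    unfolding step_sq_def by (rule power_mono) simp
  also have "\<dots> \<le> 3 * ((\<mu> k * norm (d k \<omega> - gradf (x k \<omega>)))\<^sup>2 + (\<mu> k * (2 * G + \<rho> k * G * C))\<^sup>2
      + (norm (x k \<omega> - z k \<omega>))\<^sup>2)"
    by (rule power2_add3_le)
  finally show ?thesis by (simp add: err_sq_def gap_sq_def power_mult_distrib)
qed

lemma gap_sq_Suc_le: "gap_sq (Suc k) \<omega> \<le> 2 * ((\<mu> k)\<^sup>2 * err_sq k \<omega> + (\<mu> k * (2 * G + \<rho> k * G * C) + \<mu> k * G)\<^sup>2)"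
proof -
  have "norm (x (Suc k) \<omega> - z (Suc k) \<omega>) \<le> norm (x (Suc k) \<omega> - z k \<omega>) + \<mu> k * G"
    using norm_x_update_sub_z_update_le[of k "state k \<omega>"] by (simp add: x_Suc_update z_Suc_update state_def)
  also have "\<dots> \<le> \<mu> k * norm (d k \<omega> - gradf (x k \<omega>)) + (\<mu> k * (2 * G + \<rho> k * G * C) + \<mu> k * G)"
    using norm_x_update_sub_le by (simp add: x_Suc_update state_def)
  finally have "gap_sq (Suc k) \<omega> \<le> (\<mu> k * norm (d k \<omega> - gradf (x k \<omega>)) + (\<mu> k * (2 * G + \<rho> k * G * C) + \<mu> k * G))\<^sup>2"
    unfolding gap_sq_def by (rule power_mono) simp
  also have "\<dots> \<le> 2 * ((\<mu> k * norm (d k \<omega> - gradf (x k \<omega>)))\<^sup>2 + (\<mu> k * (2 * G + \<rho> k * G * C) + \<mu> k * G)\<^sup>2)"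
    by (rule power2_add_le)
  finally show ?thesis by (simp add: err_sq_def power_mult_distrib)
qed

lemma nn_integral_err_sq_Suc_le:
  "(\<integral>\<^sup>+\<omega>. err_sq (Suc k) \<omega> \<partial>M)
     \<le> (\<integral>\<^sup>+\<omega>. ennreal ((1 - \<alpha> k)\<^sup>2 * err_sq k \<omega> + 2 * (\<alpha> k)\<^sup>2 * \<sigma>\<^sup>2 + 2 * (1 - \<alpha> k)\<^sup>2 * Lf\<^sup>2 * step_sq k \<omega>) \<partial>M)"
proof -
  define \<phi> where "\<phi> q = ennreal ((norm (gradF (x_update k (fst q)) (snd q)
      + (1 - \<alpha> k) *\<^sub>R (snd (snd (fst q)) - gradF (fst (fst q)) (snd q)) - gradf (x_update k (fst q))))\<^sup>2)"
    for q :: "('a \<times> 'a \<times> 'a) \<times> 's"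
  have state_comp: "(\<lambda>q. F (fst q)) \<in> borel_measurable (borel \<Otimes>\<^sub>M \<Xi>)"
    if "continuous_on UNIV F" for F :: "'a \<times> 'a \<times> 'a \<Rightarrow> 'a"
    by (rule borel_measurable_continuous_on[OF that measurable_fst])
  have meas: "\<phi> \<in> borel_measurable (borel \<Otimes>\<^sub>M \<Xi>)"
    unfolding \<phi>_def[abs_def]
    by (intro measurable_compose[OF _ measurable_ennreal]
        borel_measurable_continuous_on[where f="\<lambda>v. (norm v)\<^sup>2"] borel_measurable_add
        borel_measurable_diff borel_measurable_scaleR measurable_gradF_comp measurable_snd measurable_const
        state_comp continuous_on_x_update continuous_intros
        continuous_on_compose2[OF continuous_on_gradf continuous_on_x_update]) auto
  have "(\<integral>\<^sup>+\<omega>. err_sq (Suc k) \<omega> \<partial>M) = (\<integral>\<^sup>+\<omega>. \<phi> (state k \<omega>, Xs (Inr (Suc k)) \<omega>) \<partial>M)"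
    by (simp add: \<phi>_def err_sq_def d_Suc x_Suc_update)
  also have "\<dots> = (\<integral>\<^sup>+\<omega>. (\<integral>\<^sup>+s. \<phi> (state k \<omega>, s) \<partial>\<Xi>) \<partial>M)"
    by (rule nn_integral_fresh_sample[OF meas])
  also have "\<dots> \<le> (\<integral>\<^sup>+\<omega>. ennreal ((1 - \<alpha> k)\<^sup>2 * err_sq k \<omega> + 2 * (\<alpha> k)\<^sup>2 * \<sigma>\<^sup>2 + 2 * (1 - \<alpha> k)\<^sup>2 * Lf\<^sup>2 * step_sq k \<omega>) \<partial>M)"
    using momentum_error_second_moment[of "\<alpha> k"] alpha_pos[of k] alpha(3)[of k]
    by (intro nn_integral_mono) (simp add: \<phi>_def err_sq_def step_sq_def x_Suc_update state_def)
  finally show ?thesis .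
qed

lemma integrable_err_sq_0: "integrable M (err_sq 0)"
proof -
  define a where "a j \<omega> = gradF x0 (Xs (Inl j) \<omega>) - gradf x0" for j \<omega>
  have int_a: "integrable M (\<lambda>\<omega>. (norm (a j \<omega>))\<^sup>2)" if "j < b0" for j
  proof -
    have "Inl j \<in> sample_indices" using that by (simp add: sample_indices_def)
    then show ?thesis
      using integrable_distr[OF measurable_Xs, of "Inl j" "\<lambda>s. (norm (gradF x0 s - gradf x0))\<^sup>2"]
        integrable_noise_sq distr_Xs unfolding a_def by simp
  qed
  have "err_sq 0 \<omega> \<le> (\<Sum>j<b0. (norm (a j \<omega>))\<^sup>2)" for \<omega>
  proof -
    have "(\<Sum>j<b0. a j \<omega>) = (\<Sum>j<b0. gradF x0 (Xs (Inl j) \<omega>)) - real b0 *\<^sub>R gradf x0"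
      by (simp add: a_def sum_subtractf sum_constant_scaleR)
    then have "d 0 \<omega> - gradf (x 0 \<omega>) = (1 / real b0) *\<^sub>R (\<Sum>j<b0. a j \<omega>)"
      using b0_pos by (simp add: d_0 x_0 scaleR_diff_right)
    then have "err_sq 0 \<omega> = (1 / real b0)\<^sup>2 * (norm (\<Sum>j<b0. a j \<omega>))\<^sup>2"
      by (simp add: err_sq_def power_divide)
    also have "\<dots> \<le> (1 / real b0)\<^sup>2 * (\<Sum>j<b0. norm (a j \<omega>))\<^sup>2"
      by (intro mult_left_mono power_mono norm_sum) auto
    also have "\<dots> \<le> (1 / real b0)\<^sup>2 * ((\<Sum>j<b0. (norm (a j \<omega>))\<^sup>2) * real b0)"
      using sum_squared_le_sum_of_squares[of "\<lambda>j. norm (a j \<omega>)" "{..<b0}"] by (intro mult_left_mono) auto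
    also have "\<dots> = (\<Sum>j<b0. (norm (a j \<omega>))\<^sup>2) / real b0"
      using b0_pos by (simp add: power2_eq_square)
    also have "\<dots> \<le> (\<Sum>j<b0. (norm (a j \<omega>))\<^sup>2)"
      using b0_pos frac_le[of "\<Sum>j<b0. (norm (a j \<omega>))\<^sup>2" _ 1 "real b0"] by (simp add: sum_nonneg)
    finally show ?thesis .
  qed
  then show ?thesis
    using int_a
    by (intro integrable_if_nonneg_le[where H="\<lambda>\<omega>. \<Sum>j<b0. (norm (a j \<omega>))\<^sup>2", OF _ borel_measurable_err_sq])
      (auto simp: err_sq_def)
qed

lemma integrable_step_sq_if:
  "integrable M (err_sq k) \<Longrightarrow> integrable M (gap_sq k) \<Longrightarrow> integrable M (step_sq k)"
  by (rule integrable_if_nonneg_le[OF _ borel_measurable_step_sq _ step_sq_le]) (auto simp: step_sq_def)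

lemma integrable_gap_sq_Suc_if: "integrable M (err_sq k) \<Longrightarrow> integrable M (gap_sq (Suc k))"
  by (rule integrable_if_nonneg_le[OF _ borel_measurable_gap_sq _ gap_sq_Suc_le]) (auto simp: gap_sq_def)

lemma
  assumes "integrable M (err_sq k)" and "integrable M (step_sq k)"
  shows integrable_err_sq_Suc_if: "integrable M (err_sq (Suc k))"
    and integral_err_sq_Suc_le: "(\<integral>\<omega>. err_sq (Suc k) \<omega> \<partial>M) \<le> (1 - \<alpha> k)\<^sup>2 * (\<integral>\<omega>. err_sq k \<omega> \<partial>M)
        + 2 * (\<alpha> k)\<^sup>2 * \<sigma>\<^sup>2 + 2 * (1 - \<alpha> k)\<^sup>2 * Lf\<^sup>2 * (\<integral>\<omega>. step_sq k \<omega> \<partial>M)"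
proof -
  define R where "R \<omega> = (1 - \<alpha> k)\<^sup>2 * err_sq k \<omega> + 2 * (\<alpha> k)\<^sup>2 * \<sigma>\<^sup>2 + 2 * (1 - \<alpha> k)\<^sup>2 * Lf\<^sup>2 * step_sq k \<omega>" for \<omega>
  have R: "integrable M R" "\<And>\<omega>. 0 \<le> R \<omega>"
    using assms unfolding R_def[abs_def] by auto (simp_all add: err_sq_def step_sq_def)
  have le: "(\<integral>\<^sup>+\<omega>. err_sq (Suc k) \<omega> \<partial>M) \<le> ennreal (\<integral>\<omega>. R \<omega> \<partial>M)"
    using nn_integral_err_sq_Suc_le[of k] nn_integral_eq_integral[OF R(1)] R(2)
    by (simp add: R_def[abs_def])
  have nn: "0 \<le> (\<integral>\<omega>. R \<omega> \<partial>M)" using R(2) by simp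
  show "integrable M (err_sq (Suc k))"
    by (rule integrable_if_nn_integral_le[OF borel_measurable_err_sq _ le nn]) (simp add: err_sq_def)
  have "(\<integral>\<omega>. err_sq (Suc k) \<omega> \<partial>M) \<le> (\<integral>\<omega>. R \<omega> \<partial>M)"
    by (rule integral_le_if_nn_integral_le[OF borel_measurable_err_sq _ le nn]) (simp add: err_sq_def)
  also have "\<dots> = (1 - \<alpha> k)\<^sup>2 * (\<integral>\<omega>. err_sq k \<omega> \<partial>M)
        + 2 * (\<alpha> k)\<^sup>2 * \<sigma>\<^sup>2 + 2 * (1 - \<alpha> k)\<^sup>2 * Lf\<^sup>2 * (\<integral>\<omega>. step_sq k \<omega> \<partial>M)"
    using assms by (simp add: R_def[abs_def] M.prob_space)
  finally show "(\<integral>\<omega>. err_sq (Suc k) \<omega> \<partial>M) \<le> \<dots>" .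
qed

lemma integrable_err_sq_gap_sq: "integrable M (err_sq k) \<and> integrable M (gap_sq k)"
proof (induction k)
  case 0
  then show ?case using integrable_err_sq_0 by (simp add: gap_sq_def x_0 z_0)
next
  case (Suc k)
  then show ?case
    using integrable_err_sq_Suc_if integrable_step_sq_if integrable_gap_sq_Suc_if by blast
qed

lemma integrable_step_sq: "integrable M (step_sq k)"
  using integrable_err_sq_gap_sq integrable_step_sq_if by blast

lemma integrable_drift: "integrable M (drift k)"
  using integrable_err_sq_gap_sq[of "Suc k"] unfolding drift_def[abs_def] gap_sq_def[abs_def] by auto

definition pot_gap :: "nat \<Rightarrow> 'm \<Rightarrow> real" where
  "pot_gap k \<omega> = Lpot f c h g (\<rho> k) (\<mu> k) (x k \<omega>) (z k \<omega>) - Lstar"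

lemma pot_gap_nonneg: "pot_gap k \<omega> \<ge> 0"
  using potential_ge_Lstar[of "\<rho> k" "\<mu> k"] rho_pos[of k] mu_pos[of k] by (simp add: pot_gap_def)

lemma step_sq_le_potential_decrease:
  "step_sq k \<omega> \<le> 8 * \<mu> k * (pot_gap k \<omega> - pot_gap (Suc k) \<omega> + \<mu> k * err_sq k \<omega> + drift k \<omega>)"
proof -
  define s where "s = state k \<omega>"
  have "Lpot f c h g (\<rho> (Suc k)) (\<mu> (Suc k)) (x_update k s) (z_update k s)
      \<le> Lpot f c h g (\<rho> k) (\<mu> k) (x_update k s) (z_update k s)
        + (\<rho> (Suc k) - \<rho> k) / 2 * C\<^sup>2 + \<bar>\<mu> k - \<mu> (Suc k)\<bar> / (2 * (\<mu> (Suc k))\<^sup>2) * (C\<^sup>2 + (norm (x_update k s - z_update k s))\<^sup>2)"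
    by (rule potential_parameter_step[OF rho_mono mu_pos mu_mono])
  moreover have "Lpot f c h g (\<rho> k) (\<mu> k) (x_update k s) (z_update k s) \<le> Lpot f c h g (\<rho> k) (\<mu> k) (x_update k s) (z k \<omega>)"
    unfolding z_update_def using potential_z_step[OF mu_pos] by (simp add: s_def)
  moreover have "Lpot f c h g (\<rho> k) (\<mu> k) (x_update k s) (z k \<omega>)
     \<le> Lpot f c h g (\<rho> k) (\<mu> k) (x k \<omega>) (z k \<omega>) - (norm (x_update k s - x k \<omega>))\<^sup>2 / (8 * \<mu> k)
        + \<mu> k * (norm (d k \<omega> - gradf (x k \<omega>)))\<^sup>2"
    unfolding s_def state_def by (rule potential_x_step)
  ultimately have "step_sq k \<omega> / (8 * \<mu> k) \<le> pot_gap k \<omega> - pot_gap (Suc k) \<omega> + \<mu> k * err_sq k \<omega> + drift k \<omega>"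
    unfolding pot_gap_def step_sq_def err_sq_def drift_def x_Suc_update z_Suc_update s_def[symmetric]
    by linarith
  then show ?thesis using mu_pos[of k] by (simp add: field_simps)
qed

text \<open>Weighted by \<open>2 L\<^sub>f\<^sup>2\<close>, the step lengths are paid for by the decrease of the potential, up to
  \<open>16 \<mu>\<^sub>k\<^sup>2 L\<^sub>f\<^sup>2 \<le> \<alpha>\<^sub>k / 2\<close> times the estimator error.\<close>

lemma sum_step_sq_le:
  "(\<Sum>k<K. 2 * Lf\<^sup>2 * step_sq k \<omega>)
     \<le> 16 * Lf\<^sup>2 * \<mu> 0 * pot_gap 0 \<omega> + (\<Sum>k<K. \<alpha> k / 2 * err_sq k \<omega>) + 16 * Lf\<^sup>2 * \<mu> 0 * (\<Sum>k<K. drift k \<omega>)"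
proof -
  have "2 * Lf\<^sup>2 * step_sq k \<omega>
      \<le> 16 * Lf\<^sup>2 * (\<mu> k * (pot_gap k \<omega> - pot_gap (Suc k) \<omega>)) + \<alpha> k / 2 * err_sq k \<omega> + 16 * Lf\<^sup>2 * \<mu> 0 * drift k \<omega>"
    for k
  proof -
    have "2 * Lf\<^sup>2 * step_sq k \<omega>
        \<le> 16 * Lf\<^sup>2 * (\<mu> k * (pot_gap k \<omega> - pot_gap (Suc k) \<omega>)) + (16 * Lf\<^sup>2 * (\<mu> k)\<^sup>2) * err_sq k \<omega>
          + 16 * Lf\<^sup>2 * \<mu> k * drift k \<omega>"
      using mult_left_mono[OF step_sq_le_potential_decrease, of "2 * Lf\<^sup>2" k \<omega>]
      by (simp add: algebra_simps power2_eq_square)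
    also have "(16 * Lf\<^sup>2 * (\<mu> k)\<^sup>2) * err_sq k \<omega> \<le> \<alpha> k / 2 * err_sq k \<omega>"
      using alpha(2)[of k] by (intro mult_right_mono) (auto simp: err_sq_def algebra_simps)
    also have "16 * Lf\<^sup>2 * \<mu> k * drift k \<omega> \<le> 16 * Lf\<^sup>2 * \<mu> 0 * drift k \<omega>"
      using mu_le_mu0[of k] drift_nonneg[of k \<omega>] by (intro mult_right_mono mult_left_mono) auto
    finally show ?thesis by simp
  qed
  then have "(\<Sum>k<K. 2 * Lf\<^sup>2 * step_sq k \<omega>)
      \<le> (\<Sum>k<K. 16 * Lf\<^sup>2 * (\<mu> k * (pot_gap k \<omega> - pot_gap (Suc k) \<omega>))
        + \<alpha> k / 2 * err_sq k \<omega> + 16 * Lf\<^sup>2 * \<mu> 0 * drift k \<omega>)"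
    by (rule sum_mono)
  also have "\<dots> = 16 * Lf\<^sup>2 * (\<Sum>k<K. \<mu> k * (pot_gap k \<omega> - pot_gap (Suc k) \<omega>))
        + (\<Sum>k<K. \<alpha> k / 2 * err_sq k \<omega>) + 16 * Lf\<^sup>2 * \<mu> 0 * (\<Sum>k<K. drift k \<omega>)"
    by (simp add: sum.distrib sum_distrib_left)
  moreover have "(\<Sum>k<K. \<mu> k * (pot_gap k \<omega> - pot_gap (Suc k) \<omega>)) \<le> \<mu> 0 * pot_gap 0 \<omega>"
    using sum_weighted_telescope_le[of \<mu> "\<lambda>k. pot_gap k \<omega>" K, OF mu_mono pot_gap_nonneg]
      mult_nonneg_nonneg[OF less_imp_le[OF mu_pos] pot_gap_nonneg, of K K \<omega>]
    by linarith
  then have "16 * Lf\<^sup>2 * (\<Sum>k<K. \<mu> k * (pot_gap k \<omega> - pot_gap (Suc k) \<omega>)) \<le> 16 * Lf\<^sup>2 * \<mu> 0 * pot_gap 0 \<omega>"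
    using mult_left_mono[of _ _ "16 * Lf\<^sup>2"] by (simp add: mult.assoc)
  ultimately show ?thesis by linarith
qed

definition mean_err :: "nat \<Rightarrow> real" where "mean_err k = (\<integral>\<omega>. err_sq k \<omega> \<partial>M)"
definition mean_step :: "nat \<Rightarrow> real" where "mean_step k = (\<integral>\<omega>. step_sq k \<omega> \<partial>M)"
definition mean_drift :: "nat \<Rightarrow> real" where "mean_drift k = (\<integral>\<omega>. drift k \<omega> \<partial>M)"

lemma mean_err_nonneg: "mean_err k \<ge> 0"
  unfolding mean_err_def err_sq_def by simp

lemma sum_mean_step_le:
  "2 * Lf\<^sup>2 * (\<Sum>k<K. mean_step k)
     \<le> 16 * Lf\<^sup>2 * \<mu> 0 * (Lpot f c h g (\<rho> 0) (\<mu> 0) x0 x0 - Lstar) + (\<Sum>k<K. \<alpha> k / 2 * mean_err k)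
       + 16 * Lf\<^sup>2 * \<mu> 0 * (\<Sum>k<K. mean_drift k)"
proof -
  have "pot_gap 0 \<omega> = Lpot f c h g (\<rho> 0) (\<mu> 0) x0 x0 - Lstar" for \<omega>
    by (simp add: pot_gap_def x_0 z_0)
  then have "(\<integral>\<omega>. (\<Sum>k<K. 2 * Lf\<^sup>2 * step_sq k \<omega>) \<partial>M)
      \<le> (\<integral>\<omega>. 16 * Lf\<^sup>2 * \<mu> 0 * (Lpot f c h g (\<rho> 0) (\<mu> 0) x0 x0 - Lstar) + (\<Sum>k<K. \<alpha> k / 2 * err_sq k \<omega>)
          + 16 * Lf\<^sup>2 * \<mu> 0 * (\<Sum>k<K. drift k \<omega>) \<partial>M)"
    using sum_step_sq_le integrable_step_sq integrable_err_sq_gap_sq integrable_drift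
    by (intro integral_mono) auto
  then show ?thesis
    using integrable_step_sq integrable_err_sq_gap_sq integrable_drift
    by (simp add: mean_err_def mean_step_def mean_drift_def integral_sum sum_distrib_left M.prob_space)
qed

lemma weighted_mean_err_le:
  "\<alpha> k * mean_err k \<le> mean_err k - mean_err (Suc k) + 2 * (\<alpha> k)\<^sup>2 * \<sigma>\<^sup>2 + 2 * Lf\<^sup>2 * mean_step k"
proof -
  have "0 \<le> 1 - \<alpha> k" "1 - \<alpha> k \<le> 1" using alpha(3)[of k] alpha_pos[of k] by auto
  then have sq: "(1 - \<alpha> k)\<^sup>2 \<le> 1 - \<alpha> k" "(1 - \<alpha> k)\<^sup>2 \<le> 1"
    by (auto simp: power2_eq_square mult_le_one mult_right_le_one_le)
  have "0 \<le> mean_step k" unfolding mean_step_def step_sq_def by simp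
  then show ?thesis
    using integral_err_sq_Suc_le[OF conjunct1[OF integrable_err_sq_gap_sq] integrable_step_sq, of k]
      mult_right_mono[OF sq(1) mean_err_nonneg[of k]] mult_right_mono[OF sq(2), of "2 * Lf\<^sup>2 * mean_step k"]
    by (simp add: mean_err_def mean_step_def algebra_simps)
qed

lemma sum_weighted_mean_err_le:
  "(\<Sum>k<K. \<alpha> k * mean_err k)
     \<le> 2 * mean_err 0 + (\<Sum>k<K. 4 * (\<alpha> k)\<^sup>2 * \<sigma>\<^sup>2)
       + 32 * \<mu> 0 * Lf\<^sup>2 * (Lpot f c h g (\<rho> 0) (\<mu> 0) x0 x0 - Lstar) + 32 * \<mu> 0 * Lf\<^sup>2 * (\<Sum>k<K. mean_drift k)"
proof -
  have "(\<Sum>k<K. \<alpha> k * mean_err k) \<le> (\<Sum>k<K. (mean_err k - mean_err (Suc k)) + 2 * (\<alpha> k)\<^sup>2 * \<sigma>\<^sup>2 + 2 * Lf\<^sup>2 * mean_step k)"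
    by (rule sum_mono) (use weighted_mean_err_le in simp)
  also have "\<dots> = (mean_err 0 - mean_err K) + (\<Sum>k<K. 2 * (\<alpha> k)\<^sup>2 * \<sigma>\<^sup>2) + 2 * Lf\<^sup>2 * (\<Sum>k<K. mean_step k)"
    by (simp add: sum.distrib sum_distrib_left sum_lessThan_telescope')
  finally have "(\<Sum>k<K. \<alpha> k * mean_err k)
      \<le> (mean_err 0 - mean_err K) + (\<Sum>k<K. 2 * (\<alpha> k)\<^sup>2 * \<sigma>\<^sup>2) + 2 * Lf\<^sup>2 * (\<Sum>k<K. mean_step k)" .
  moreover have "(\<Sum>k<K. \<alpha> k / 2 * mean_err k) = (\<Sum>k<K. \<alpha> k * mean_err k) / 2"
    by (simp add: sum_divide_distrib)
  moreover have "(\<Sum>k<K. 4 * (\<alpha> k)\<^sup>2 * \<sigma>\<^sup>2) = 2 * (\<Sum>k<K. 2 * (\<alpha> k)\<^sup>2 * \<sigma>\<^sup>2)"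
    by (simp add: sum_distrib_left mult.assoc)
  ultimately show ?thesis
    using sum_mean_step_le[of K] mean_err_nonneg[of K] by (simp add: algebra_simps)
qed

lemma average_weighted_mean_err_le:
  assumes "K \<ge> 1"
  shows "(1 / real K) * (\<Sum>k<K. \<alpha> k * mean_err k)
    \<le> 32 * \<mu> 0 * Lf\<^sup>2 * (Lpot f c h g (\<rho> 0) (\<mu> 0) x0 x0 - Lstar) / real K + 2 * mean_err 0 / real K
      + 32 * \<mu> 0 * Lf\<^sup>2 / real K * (\<Sum>k<K. mean_drift k) + (1 / real K) * (\<Sum>k<K. 4 * (\<alpha> k)\<^sup>2 * \<sigma>\<^sup>2)"
proof -
  have "real K > 0" using assms by simp
  with mult_left_mono[OF sum_weighted_mean_err_le, of "1 / real K" K]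
  show ?thesis by (simp add: field_simps)
qed

lemma average_mean_err_le_constant_parameters:
  assumes const: "\<And>k. \<mu> k = \<mu> 0" "\<And>k. \<alpha> k = \<alpha> 0" "\<And>k. \<rho> k = \<rho> 0" and "K \<ge> 1"
  shows "(1 / real K) * (\<Sum>k<K. mean_err k)
    \<le> 32 * \<mu> 0 * Lf\<^sup>2 * (Lpot f c h g (\<rho> 0) (\<mu> 0) x0 x0 - Lstar) / (\<alpha> 0 * real K)
      + 2 * mean_err 0 / (\<alpha> 0 * real K) + 4 * \<alpha> 0 * \<sigma>\<^sup>2"
proof -
  have K: "real K > 0" and \<alpha>: "\<alpha> 0 > 0" using assms alpha_pos by auto
  have "mean_drift k = 0" for k
    using const(1)[of "Suc k"] const(1)[of k] const(3)[of "Suc k"] const(3)[of k]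
    by (simp add: mean_drift_def drift_def)
  moreover have "(\<Sum>k<K. \<alpha> k * mean_err k) = (\<Sum>k<K. \<alpha> 0 * mean_err k)"
    and "(\<Sum>k<K. 4 * (\<alpha> k)\<^sup>2 * \<sigma>\<^sup>2) = (\<Sum>k<K. 4 * (\<alpha> 0)\<^sup>2 * \<sigma>\<^sup>2)"
    by (rule sum.cong[OF refl], metis const(2))+
  ultimately have "\<alpha> 0 * (\<Sum>k<K. mean_err k)
      \<le> 2 * mean_err 0 + real K * (4 * (\<alpha> 0)\<^sup>2 * \<sigma>\<^sup>2) + 32 * \<mu> 0 * Lf\<^sup>2 * (Lpot f c h g (\<rho> 0) (\<mu> 0) x0 x0 - Lstar)"
    using sum_weighted_mean_err_le[of K] by (simp add: sum_distrib_left)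
  from divide_right_mono[OF this, of "\<alpha> 0 * real K"] K \<alpha>
  show ?thesis by (simp add: field_simps power2_eq_square)
qed

lemma mean_err_eq:
  "(\<integral>\<omega>. (norm ((d k \<omega> + r *\<^sub>R gradc Dc (x k \<omega>) (c (x k \<omega>))) - gradQ gradf Dc c r (x k \<omega>)))\<^sup>2 \<partial>M) = mean_err k"
  by (simp add: gradQ_def mean_err_def err_sq_def)

lemma mean_drift_eq:
  "(\<rho> (Suc k) - \<rho> k) / 2 * C\<^sup>2
     + (\<integral>\<omega>. \<bar>\<mu> k - \<mu> (Suc k)\<bar> / (2 * (\<mu> (Suc k))\<^sup>2) * (C\<^sup>2 + (norm (x (Suc k) \<omega> - z (Suc k) \<omega>))\<^sup>2) \<partial>M)
   = mean_drift k"
  using integrable_err_sq_gap_sq[of "Suc k"]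
  by (simp add: mean_drift_def drift_def[abs_def] gap_sq_def[abs_def] M.prob_space)

end

theorem lemmaC11:
  fixes M :: "'m measure" and \<Xi> :: "'s measure"
    and Fs :: "'a::euclidean_space \<Rightarrow> 's \<Rightarrow> real" and gradF :: "'a \<Rightarrow> 's \<Rightarrow> 'a"
    and f :: "'a \<Rightarrow> real" and gradf :: "'a \<Rightarrow> 'a"
    and c :: "'a \<Rightarrow> 'b::euclidean_space" and Dc :: "'a \<Rightarrow> 'a \<Rightarrow> 'b"
    and h g :: "'a \<Rightarrow> real"
    and L\<^sub>f L\<^sub>c C G \<sigma> :: real
    and b\<^sub>0 :: nat and Xs :: "nat + nat \<Rightarrow> 'm \<Rightarrow> 's"
    and x z d :: "nat \<Rightarrow> 'm \<Rightarrow> 'a" and x\<^sub>0 :: 'a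
    and \<alpha> \<mu> \<rho> :: "nat \<Rightarrow> real" and \<beta> \<mu>bar :: real
  assumes
    \<comment> \<open>f(x) = E_xi[F(x,xi)], stochastic gradients (A2), (A4)\<close>
    prob_Xi: "prob_space \<Xi>"
    and F_int: "\<And>x. integrable \<Xi> (Fs x)"
    and f_def: "\<And>x. f x = (\<integral>s. Fs x s \<partial>\<Xi>)"
    and F_diff: "AE s in \<Xi>. \<forall>x. ((\<lambda>y. Fs y s) has_derivative (\<lambda>v. gradF x s \<bullet> v)) (at x)"
    and gradF_meas: "(\<lambda>(x, s). gradF x s) \<in> borel_measurable (borel \<Otimes>\<^sub>M \<Xi>)"
    and A2_int: "\<And>x. integrable \<Xi> (gradF x)"
    and A2_unbiased: "\<And>x. (\<integral>s. gradF x s \<partial>\<Xi>) = gradf x"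
    and A2_var: "\<And>x. (\<integral>\<^sup>+ s. ennreal ((norm (gradF x s - gradf x))\<^sup>2) \<partial>\<Xi>) \<le> ennreal (\<sigma>\<^sup>2)"
    and A4: "\<And>x y. (\<integral>\<^sup>+ s. ennreal ((norm (gradF x s - gradF y s))\<^sup>2) \<partial>\<Xi>)
                   \<le> ennreal (L\<^sub>f\<^sup>2 * (norm (x - y))\<^sup>2)"
    \<comment> \<open>(A1)\<close>
    and f_grad: "\<And>x. (f has_derivative (\<lambda>v. gradf x \<bullet> v)) (at x)"
    and f_smooth: "\<And>x y. norm (gradf x - gradf y) \<le> L\<^sub>f * norm (x - y)"
    and c_deriv: "\<And>x. (c has_derivative Dc x) (at x)"
    and c_smooth: "\<And>x y. onorm (\<lambda>v. gradc Dc x v - gradc Dc y v) \<le> L\<^sub>c * norm (x - y)"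
    and h_convex: "convex_on UNIV h" and g_convex: "convex_on UNIV g"
    and C_pos: "C > 0" and G_pos: "G > 0"
    and gradf_bd: "\<And>x. norm (gradf x) \<le> G"
    and h_subgrad_bd: "\<And>x v. v \<in> subdiff h x \<Longrightarrow> norm v \<le> G"
    and g_subgrad_bd: "\<And>x v. v \<in> subdiff g x \<Longrightarrow> norm v \<le> G"
    and gradc_bd: "\<And>x. onorm (gradc Dc x) \<le> G"
    and c_bd: "\<And>x. norm (c x) \<le> C"
    \<comment> \<open>F^* > -infinity\<close>
    and Fstar_finite: "bdd_below (range (\<lambda>x. f x + h x - g x))"
    \<comment> \<open>parameters\<close>
    and rho0_pos: "\<rho> 0 > 0"
    and mu_pos: "\<And>k. \<mu> k > 0"
    and step: "\<And>k. \<mu> k * (\<rho> k * (L\<^sub>f / \<rho> 0 + G\<^sup>2 + C * L\<^sub>c)) \<le> 1 / 4"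
    and mu_mono: "\<And>k. \<mu> (Suc k) \<le> \<mu> k"
    and rho_mono: "\<And>k. \<rho> k \<le> \<rho> (Suc k)"
    and beta: "0 < \<beta>" "\<beta> \<le> 1"
    and alpha: "\<And>k. 0 < 32 * (\<mu> k)\<^sup>2 * L\<^sub>f\<^sup>2" "\<And>k. 32 * (\<mu> k)\<^sup>2 * L\<^sub>f\<^sup>2 \<le> \<alpha> k" "\<And>k. \<alpha> k \<le> 1"
    and mubar: "\<And>k. \<mu> k \<le> \<mu>bar"
    \<comment> \<open>i.i.d. samples: batch xi^0_j (j < b0) and xi^k (k >= 1)\<close>
    and prob_M: "prob_space M"
    and b0_pos: "b\<^sub>0 \<ge> 1"
    and Xs_indep: "prob_space.indep_vars M (\<lambda>_. \<Xi>) Xs (Inl ` {..<b\<^sub>0} \<union> Inr ` {1..})"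
    and Xs_distr: "\<And>i. i \<in> Inl ` {..<b\<^sub>0} \<union> Inr ` {1..} \<Longrightarrow> distr M \<Xi> (Xs i) = \<Xi>"
    \<comment> \<open>MoSSP-R iterates\<close>
    and x_0: "\<And>\<omega>. x 0 \<omega> = x\<^sub>0" and z_0: "\<And>\<omega>. z 0 \<omega> = x\<^sub>0"
    and d_0: "\<And>\<omega>. d 0 \<omega> = (1 / real b\<^sub>0) *\<^sub>R (\<Sum>j<b\<^sub>0. gradF x\<^sub>0 (Xs (Inl j) \<omega>))"
    and d_Suc: "\<And>k \<omega>. d (Suc k) \<omega> = gradF (x (Suc k) \<omega>) (Xs (Inr (Suc k)) \<omega>)
                  + (1 - \<alpha> k) *\<^sub>R (d k \<omega> - gradF (x k \<omega>) (Xs (Inr (Suc k)) \<omega>))"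
    and x_Suc: "\<And>k \<omega>. x (Suc k) \<omega> = prox (\<mu> k) h
                  (z k \<omega> - \<mu> k *\<^sub>R (d k \<omega> + \<rho> k *\<^sub>R gradc Dc (x k \<omega>) (c (x k \<omega>))))"
    and z_Suc: "\<And>k \<omega>. z (Suc k) \<omega> = z k \<omega> - \<beta> *\<^sub>R (prox (\<mu> k) g (z k \<omega>) - x (Suc k) \<omega>)"
  shows
    "(\<forall>K\<ge>1.
       (1 / real K) * (\<Sum>k<K. \<alpha> k * (\<integral>\<omega>. (norm ((d k \<omega> + \<rho> k *\<^sub>R gradc Dc (x k \<omega>) (c (x k \<omega>)))
                                       - gradQ gradf Dc c (\<rho> k) (x k \<omega>)))\<^sup>2 \<partial>M))
       \<le> 32 * \<mu> 0 * L\<^sub>f\<^sup>2 * (Lpot f c h g (\<rho> 0) (\<mu> 0) x\<^sub>0 x\<^sub>0 - (Fstar f h g - G\<^sup>2 * \<mu>bar / 2)) / real K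
         + 2 * (\<integral>\<omega>. (norm ((d 0 \<omega> + \<rho> 0 *\<^sub>R gradc Dc (x 0 \<omega>) (c (x 0 \<omega>)))
                                       - gradQ gradf Dc c (\<rho> 0) (x 0 \<omega>)))\<^sup>2 \<partial>M) / real K
         + 32 * \<mu> 0 * L\<^sub>f\<^sup>2 / real K *
           (\<Sum>k<K. (\<rho> (Suc k) - \<rho> k) / 2 * C\<^sup>2
              + (\<integral>\<omega>. \<bar>\<mu> k - \<mu> (Suc k)\<bar> / (2 * (\<mu> (Suc k))\<^sup>2)
                        * (C\<^sup>2 + (norm (x (Suc k) \<omega> - z (Suc k) \<omega>))\<^sup>2) \<partial>M))
         + (1 / real K) * (\<Sum>k<K. 4 * (\<alpha> k)\<^sup>2 * \<sigma>\<^sup>2))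
     \<and>
     ((\<forall>k. \<mu> k = \<mu> 0 \<and> \<alpha> k = \<alpha> 0 \<and> \<rho> k = \<rho> 0) \<longrightarrow>
      (\<forall>K\<ge>1.
       (1 / real K) * (\<Sum>k<K. (\<integral>\<omega>. (norm ((d k \<omega> + \<rho> 0 *\<^sub>R gradc Dc (x k \<omega>) (c (x k \<omega>)))
                                       - gradQ gradf Dc c (\<rho> 0) (x k \<omega>)))\<^sup>2 \<partial>M))
       \<le> 32 * \<mu> 0 * L\<^sub>f\<^sup>2 * (Lpot f c h g (\<rho> 0) (\<mu> 0) x\<^sub>0 x\<^sub>0 - (Fstar f h g - G\<^sup>2 * \<mu>bar / 2))
             / (\<alpha> 0 * real K)
         + 2 * (\<integral>\<omega>. (norm ((d 0 \<omega> + \<rho> 0 *\<^sub>R gradc Dc (x 0 \<omega>) (c (x 0 \<omega>)))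
                                       - gradQ gradf Dc c (\<rho> 0) (x 0 \<omega>)))\<^sup>2 \<partial>M) / (\<alpha> 0 * real K)
         + 4 * \<alpha> 0 * \<sigma>\<^sup>2))"
proof -
  interpret mossp_r c Dc G C "L\<^sub>c" \<Xi> gradF gradf \<sigma> "L\<^sub>f" M f h g "b\<^sub>0" Xs x z d "x\<^sub>0" \<alpha> \<mu> \<rho> \<beta> \<mu>bar
    by (intro mossp_r.intro constraint_map.intro stochastic_gradient.intro stochastic_gradient_axioms.intro
        mossp_r_axioms.intro) (fact assms)+
  show ?thesis
    unfolding mean_err_eq mean_drift_eq Lstar_def[symmetric]
    by (intro conjI allI impI average_weighted_mean_err_le average_mean_err_le_constant_parameters) blast+
qed

end
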